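(* Let $q\in\mathbb{C}$ with $0<|q|<1$, and let $a,b,c,d,e$ be complex numbers such that at least one of $a$, $b$, $c$ is of the form $q^n$ with $n\in\{1,2,\ldots\}$ (and such that all terms below are well defined). Then \[ \sum_{k=-\infty}^\infty \frac{(q/a,q/b,q/c,q/d,q/e)_k}{(a,b,c,d,e)_k}(abcdeq^{-3})^k =\frac{(q,ab/q,bc/q,ac/q)_\infty}{(a,b,c,abc/q^2)_\infty} \sum_{k=0}^\infty\frac{(q/a,q/b,q/c,de/q)_k}{(q,q^3/abc,d,e)_k}q^k, \] and \[ \sum_{k=-\infty}^\infty \frac{(q/a,q/b,q/c,q/d,q/e)_k}{(aq,bq,cq,dq,eq)_k}(abcdeq^{-1})^k =\frac{(q,ab,bc,ac)_\infty}{(aq,bq,cq,abc/q)_\infty} \sum_{k=0}^\infty\frac{(q/a,q/b,q/c,de)_k}{(q,q^2/abc,dq,eq)_k}q^k. \]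
   Context: For an integer $n$, the $q$-shifted factorial is $(a)_n=(a;q)_n$ with $(a)_0=1$, $(a)_n=(1-a)(1-aq)\cdots(1-aq^{n-1})$ for $n\ge1$, and $(a)_n=[(1-aq^{-1})(1-aq^{-2})\cdots(1-aq^{n})]^{-1}$ for $n\le -1$. In particular $1/(q)_n=0$ for $n<0$. Also $(a_1,\ldots,a_m)_n=(a_1)_n\cdots(a_m)_n$ and $(a_1,\ldots,a_m)_\infty=\lim_{n\to\infty}(a_1,\ldots,a_m)_n$. *)

theory Defs
  imports "HOL-Analysis.Analysis"
begin

definition qpoch :: "complex \<Rightarrow> complex \<Rightarrow> int \<Rightarrow> complex" where
  "qpoch a q n =
     (if n \<ge> 0 then (\<Prod>j<nat n. (1 - a * q ^ j))
      else 1 / (\<Prod>j\<in>{1..nat (- n)}. (1 - a / q ^ j)))"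

definition qpoch_inf :: "complex \<Rightarrow> complex \<Rightarrow> complex" where
  "qpoch_inf a q = lim (\<lambda>n::nat. qpoch a q (int n))"

end

theory Submission
  imports Defs
begin

text \<open>If one of \<open>a, b, c\<close>, say \<open>a\<close>, equals \<open>q\<^bsup>N+1\<^esup>\<close>, then \<open>(q/a)\<^sub>k = (q\<^bsup>-N\<^esup>)\<^sub>k\<close> vanishes for
  \<open>k > N\<close>, and the reflection formula for \<open>(x)\<^sub>-\<^sub>m\<close> shows that the terms with \<open>k < -N\<close> (resp.
  \<open>k < -N-1\<close>) vanish too, so both bilateral series are finite.  Folding the negative terms onto
  the positive ones turns them into terminating very-well-poised \<open>\<^sub>8\<phi>\<^sub>7\<close> series with parameter
  \<open>1\<close> (resp. \<open>q\<close>), which Watson's transformation converts into the balanced \<open>\<^sub>4\<phi>\<^sub>3\<close> series on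
  the right; the infinite products reduce to finite ones by \<open>(x)\<^sub>\<infinity> = (x)\<^sub>N (x q\<^sup>N)\<^sub>\<infinity>\<close>.
  Watson's transformation is proved classically: expand two of the well-poised pairs by the
  q-Pfaff-Saalschuetz sum, interchange the summations and evaluate the inner sums by the
  terminating \<open>\<^sub>6\<phi>\<^sub>5\<close> sum, which in turn comes about the same way from the terminating
  very-well-poised \<open>\<^sub>4\<phi>\<^sub>3\<close> sum.\<close>

definition qp :: "complex \<Rightarrow> complex \<Rightarrow> nat \<Rightarrow> complex" where
  "qp a q n = (\<Prod>j<n. 1 - a * q ^ j)"

lemma qpoch_of_nat: "qpoch a q (int n) = qp a q n"
  by (simp add: qpoch_def qp_def)

lemma qp_0 [simp]: "qp a q 0 = 1"
  by (simp add: qp_def)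

lemma qp_Suc: "qp a q (Suc n) = qp a q n * (1 - a * q ^ n)"
  by (simp add: qp_def)

lemma qp_add: "qp a q (m + n) = qp a q m * qp (a * q ^ m) q n"
  by (induction n) (simp_all add: qp_Suc power_add mult_ac)

lemma qp_Suc_left: "qp a q (Suc n) = (1 - a) * qp (a * q) q n"
  using qp_add[of a q 1 n] by (simp add: qp_def)

lemma qp_times_q: "(1 - a) * qp (a * q) q n = qp a q n * (1 - a * q ^ n)"
  by (metis qp_Suc qp_Suc_left)

lemma qp_eq_0I: "a * q ^ j = 1 \<Longrightarrow> j < n \<Longrightarrow> qp a q n = 0"
  unfolding qp_def by (rule prod_zero) auto

lemma qp_nonzero_iff: "qp a q n \<noteq> 0 \<longleftrightarrow> (\<forall>j<n. a * q ^ j \<noteq> 1)"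
  unfolding qp_def by (auto simp: prod_zero_iff)

lemma qp_nonzeroI: "(\<And>j. j < n \<Longrightarrow> a * q ^ j \<noteq> 1) \<Longrightarrow> qp a q n \<noteq> 0"
  by (simp add: qp_nonzero_iff)

lemma qp_all_nonzero_iff: "(\<forall>n. qp a q n \<noteq> 0) \<longleftrightarrow> (\<forall>j. a * q ^ j \<noteq> 1)"
  by (auto simp: qp_nonzero_iff)

lemma neq_1_shift:
  fixes a q :: complex
  assumes "\<And>i. a * q ^ i \<noteq> 1"
  shows "(a * q) * q ^ i \<noteq> 1"
  using assms[of "Suc i"] by (simp add: mult.assoc)

lemma power_Suc_neq_1:
  fixes q :: complex
  assumes "norm q < 1"
  shows "q ^ Suc i \<noteq> 1"
proof
  assume "q ^ Suc i = 1"
  then have "norm q ^ Suc i = 1" by (metis norm_one norm_power)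
  moreover have "norm q ^ Suc i \<le> norm q"
    using assms by (simp add: power_le_one mult_left_le)
  ultimately show False using assms by simp
qed

lemma qp_q_nonzero:
  assumes "norm q < 1"
  shows "qp q q n \<noteq> 0"
  using power_Suc_neq_1[OF assms] by (intro qp_nonzeroI) simp

definition qtriangle :: "complex \<Rightarrow> nat \<Rightarrow> complex" where
  "qtriangle q n = (\<Prod>i<n. q ^ i)"

lemma qtriangle_Suc: "qtriangle q (Suc n) = qtriangle q n * q ^ n"
  by (simp add: qtriangle_def)

lemma qtriangle_nonzero: "q \<noteq> 0 \<Longrightarrow> qtriangle q n \<noteq> 0"
  by (simp add: qtriangle_def)

lemma qtriangle_square: "qtriangle q n * qtriangle q n * q ^ n = q ^ (n * n)"
proof (induction n)
  case (Suc n)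
  have "qtriangle q (Suc n) * qtriangle q (Suc n) * q ^ Suc n
      = (qtriangle q n * qtriangle q n * q ^ n) * q ^ n * q ^ n * q"
    by (simp add: qtriangle_Suc mult_ac)
  also have "\<dots> = q ^ (n * n + n + n + 1)" using Suc by (simp add: power_add)
  also have "n * n + n + n + 1 = Suc n * Suc n" by simp
  finally show ?case .
qed (simp add: qtriangle_def)

text \<open>Reversal of a finite product: \<open>(a;q)\<^sub>n = (-a)\<^sup>n q\<^bsup>n(n-1)/2\<^esup> (q\<^bsup>1-n\<^esup>/a;q)\<^sub>n\<close>, with \<open>w = q\<^bsup>1-n\<^esup>/a\<close>.\<close>

lemma qp_reverse:
  assumes "q \<noteq> 0" "w \<noteq> 0" "a * w * q ^ n = q"
  shows "qp a q n = (-1/w) ^ n / qtriangle q n * qp w q n"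
  using assms(3)
proof (induction n arbitrary: a)
  case 0
  then show ?case by (simp add: qtriangle_def)
next
  case (Suc n)
  have h: "(a * q) * w * q ^ n = q" using Suc.prems by (simp add: mult_ac)
  have a: "a = 1 / (w * q ^ n)" using Suc.prems assms(1,2) by (simp add: field_simps)
  have "qp a q (Suc n) = (1 - a) * qp (a * q) q n" by (rule qp_Suc_left)
  also have "\<dots> = (1 - a) * ((-1/w) ^ n / qtriangle q n * qp w q n)" using Suc.IH[OF h] by simp
  also have "1 - a = (-1/w) * (1 - w * q ^ n) / q ^ n"
    unfolding a using assms(1,2) by (simp add: field_simps)
  also have "(-1/w) * (1 - w * q ^ n) / q ^ n * ((-1/w) ^ n / qtriangle q n * qp w q n)
      = (-1/w) ^ Suc n / qtriangle q (Suc n) * qp w q (Suc n)"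
    by (simp add: qp_Suc qtriangle_Suc mult_ac)
  finally show ?case .
qed

lemma qp_inverse_power_div:
  assumes q: "q \<noteq> 0" and Q: "\<And>n. qp q q n \<noteq> 0"
  shows "qp (1 / q ^ (j + m)) q j / qp q q (j + m) = (-1 / q ^ (m + 1)) ^ j / (qtriangle q j * qp q q m)"
proof -
  have r: "qp (1 / q ^ (j + m)) q j = (-1 / q ^ (m + 1)) ^ j / qtriangle q j * qp (q ^ (m + 1)) q j"
    by (rule qp_reverse[OF q]) (use q in \<open>simp_all add: power_add\<close>)
  have a: "qp q q (j + m) = qp q q m * qp (q ^ (m + 1)) q j"
    by (subst add.commute) (simp add: qp_add mult.commute)
  have "qp (q ^ (m + 1)) q j \<noteq> 0" using Q[of "j + m"] a by auto
  then show ?thesis unfolding r a by (simp add: divide_divide_eq_left)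
qed

text \<open>\<open>vwp a q k\<close> is the very-well-poised factor \<open>(a;q)\<^sub>k (1 - a q\<^bsup>2k\<^esup>) / (1 - a)\<close>, written without
  the division so that it also makes sense at \<open>a = 1\<close>.\<close>

definition vwp :: "complex \<Rightarrow> complex \<Rightarrow> nat \<Rightarrow> complex" where
  "vwp a q k = (if k = 0 then 1 else (1 - a * q ^ (2 * k)) * qp (a * q) q (k - 1))"

lemma vwp_0 [simp]: "vwp a q 0 = 1"
  by (simp add: vwp_def)

lemma vwp_Suc: "vwp a q (Suc k) = (1 - a * q ^ (2 * Suc k)) * qp (a * q) q k"
  by (simp add: vwp_def)

text \<open>The summand shared by the terminating very-well-poised series below, whose
  denominator parameter \<open>a q\<^bsup>N+1\<^esup>\<close> is the one paired with \<open>q\<^bsup>-N\<^esup>\<close>; every further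
  well-poised pair of parameters \<open>b, a q/b\<close> contributes a factor \<open>wp_ratio a q b k\<close>.\<close>

definition vwp_term :: "complex \<Rightarrow> complex \<Rightarrow> nat \<Rightarrow> complex \<Rightarrow> nat \<Rightarrow> complex" where
  "vwp_term a q N y k = vwp a q k * qp (1 / q ^ N) q k / (qp q q k * qp (a * q ^ (N + 1)) q k) * y ^ k"

definition wp_ratio :: "complex \<Rightarrow> complex \<Rightarrow> complex \<Rightarrow> nat \<Rightarrow> complex" where
  "wp_ratio a q b k = qp b q k / qp (a * q / b) q k"

lemma vwp_term_mult_power: "vwp_term a q N (y * z) k = vwp_term a q N y k * z ^ k"
  by (simp add: vwp_term_def power_mult_distrib)

lemma vwp_shift: "vwp a q (j + m) * qp (a * q ^ (j + m)) q j = qp (a * q) q (2 * j) * vwp (a * q ^ (2 * j)) q m"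
proof (cases j)
  case 0 then show ?thesis by simp
next
  case (Suc j')
  have e1: "j + m = Suc (j' + m)" using Suc by simp
  have A0: "a * q * q ^ (j' + m) = a * q ^ (j + m)" using e1 by (simp add: mult_ac)
  have A: "qp (a * q) q (j' + m) * qp (a * q ^ (j + m)) q j = qp (a * q) q (j' + m + j)"
    by (simp only: qp_add A0)
  have e2: "j' + m + j = Suc (2 * j') + m" using Suc by simp
  have B0: "a * q * q ^ Suc (2 * j') = a * q ^ (2 * j)" using Suc by (simp add: mult_ac)
  have B: "qp (a * q) q (Suc (2 * j') + m) = qp (a * q) q (Suc (2 * j')) * qp (a * q ^ (2 * j)) q m"
    by (simp only: qp_add B0)
  have C: "qp (a * q) q (2 * j) = qp (a * q) q (Suc (2 * j')) * (1 - a * q ^ (2 * j))"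
  proof -
    have "2 * j = Suc (Suc (2 * j'))" using Suc by simp
    then show ?thesis using B0 by (simp only: qp_Suc)
  qed
  have LHS: "vwp a q (j + m) * qp (a * q ^ (j + m)) q j
        = (1 - a * q ^ (2 * (j + m))) * (qp (a * q) q (Suc (2 * j')) * qp (a * q ^ (2 * j)) q m)"
    using A B e2 by (simp add: e1 vwp_Suc mult_ac)
  show ?thesis
  proof (cases m)
    case 0
    then show ?thesis unfolding LHS C by simp
  next
    case (Suc m')
    have D: "qp (a * q ^ (2 * j)) q m = (1 - a * q ^ (2 * j)) * qp (a * q ^ (2 * j) * q) q m'"
      using Suc by (simp add: qp_Suc_left)
    have E: "vwp (a * q ^ (2 * j)) q m = (1 - a * q ^ (2 * (j + m))) * qp (a * q ^ (2 * j) * q) q m'"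
      using Suc by (simp add: vwp_Suc power_add mult_ac)
    show ?thesis unfolding LHS C D E by (simp add: mult_ac)
  qed
qed

lemma vwp_4phi3_partial_sum:
  assumes q: "q \<noteq> 0" and b: "b \<noteq> 0" and Q: "\<And>n. qp q q n \<noteq> 0"
    and Z: "\<And>i. a * q * b * q ^ i \<noteq> 1"
  shows "(\<Sum>k\<le>m. vwp a q k * qp (1 / b) q k * b ^ k / (qp q q k * qp (a * q * b) q k))
       = qp (a * q) q m * qp (q / b) q m * b ^ m / (qp q q m * qp (a * q * b) q m)"
proof (induction m)
  case (Suc m)
  define u where "u = q ^ m"
  define d1 where "d1 = 1 - q * u"
  define d2 where "d2 = 1 - a * q * b * u"
  define P where "P = qp (a * q) q m * qp (q / b) q m * b ^ m / (qp q q m * qp (a * q * b) q m)"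
  have nz: "qp q q m \<noteq> 0" "qp (a * q * b) q m \<noteq> 0" "d1 \<noteq> 0" "d2 \<noteq> 0"
    using Q[of m] Q[of "Suc m"] Z[of m] qp_nonzeroI[of m "a * q * b" q] Z
    by (auto simp: qp_Suc u_def d1_def d2_def mult_ac)
  have "q ^ (2 * Suc m) = (q * u)\<^sup>2"
    by (simp only: mult.commute[of 2 "Suc m"] power_mult u_def power_Suc)
  then have v: "vwp a q (Suc m) = (1 - a * q\<^sup>2 * u\<^sup>2) * qp (a * q) q m"
    by (simp add: vwp_Suc power_mult_distrib mult.assoc)
  have p1: "qp (1 / b) q (Suc m) = (b - 1) / b * qp (q / b) q m"
    using b by (simp add: qp_Suc_left field_simps)
  have p2: "qp q q (Suc m) = qp q q m * d1" "qp (a * q * b) q (Suc m) = qp (a * q * b) q m * d2"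
    by (simp_all add: qp_Suc d1_def d2_def u_def mult_ac)
  have p3: "qp (a * q) q (Suc m) = qp (a * q) q m * (1 - a * q * u)"
      "qp (q / b) q (Suc m) = qp (q / b) q m * (b - q * u) / b"
    using b by (simp_all add: qp_Suc u_def field_simps)
  have summand: "vwp a q (Suc m) * qp (1 / b) q (Suc m) * b ^ Suc m / (qp q q (Suc m) * qp (a * q * b) q (Suc m))
      = P * ((1 - a * q\<^sup>2 * u\<^sup>2) * (b - 1) / (d1 * d2))"
    unfolding v p1 p2 P_def using nz b by (simp add: field_simps)
  have target: "qp (a * q) q (Suc m) * qp (q / b) q (Suc m) * b ^ Suc m / (qp q q (Suc m) * qp (a * q * b) q (Suc m))
      = P * ((1 - a * q * u) * (b - q * u) / (d1 * d2))"
    unfolding p2 p3 P_def using nz b by (simp add: field_simps)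
  have "(\<Sum>k\<le>Suc m. vwp a q k * qp (1 / b) q k * b ^ k / (qp q q k * qp (a * q * b) q k))
      = P + P * ((1 - a * q\<^sup>2 * u\<^sup>2) * (b - 1) / (d1 * d2))"
    unfolding sum.atMost_Suc Suc.IH summand P_def ..
  also have "\<dots> = P * ((d1 * d2 + (1 - a * q\<^sup>2 * u\<^sup>2) * (b - 1)) / (d1 * d2))"
    using nz by (simp add: field_simps)
  also have "d1 * d2 + (1 - a * q\<^sup>2 * u\<^sup>2) * (b - 1) = (1 - a * q * u) * (b - q * u)"
    unfolding d1_def d2_def by (simp add: algebra_simps power2_eq_square)
  finally show ?case unfolding target .
qed simp

lemma vwp_4phi3_sum_eq_0:
  assumes q: "q \<noteq> 0" and Q: "\<And>n. qp q q n \<noteq> 0"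
    and Z: "\<And>i. a * q ^ (N + 1) * q ^ i \<noteq> 1" and N: "N \<ge> 1"
  shows "(\<Sum>k\<le>N. vwp_term a q N (q ^ N) k) = 0"
proof -
  have aq: "a * q ^ (N + 1) = a * q * q ^ N" by (simp add: mult_ac)
  have "qp (q / q ^ N) q N = 0"
    by (rule qp_eq_0I[of _ _ "N - 1"]) (use q N in \<open>simp_all add: power_diff\<close>)
  then have "(\<Sum>k\<le>N. vwp a q k * qp (1 / q ^ N) q k * (q ^ N) ^ k / (qp q q k * qp (a * q * q ^ N) q k)) = 0"
    using vwp_4phi3_partial_sum[OF q _ Q, where a=a and b="q ^ N" and m=N] Z q unfolding aq by simp
  then show ?thesis unfolding vwp_term_def aq by (simp add: mult_ac)
qed

definition saal_term :: "complex \<Rightarrow> complex \<Rightarrow> complex \<Rightarrow> complex \<Rightarrow> complex \<Rightarrow> nat \<Rightarrow> nat \<Rightarrow> complex" where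
  "saal_term a b c d q n k
     = qp (1 / q ^ n) q k * qp a q k * qp b q k / (qp q q k * qp c q k * qp d q k) * q ^ k"

definition saal_prod :: "complex \<Rightarrow> complex \<Rightarrow> complex \<Rightarrow> complex \<Rightarrow> nat \<Rightarrow> complex" where
  "saal_prod a b c q n = qp (c / a) q n * qp (c / b) q n / (qp c q n * qp (c / (a * b)) q n)"

lemma saal_term_step:
  assumes q: "q \<noteq> 0" and Q: "\<And>n. qp q q n \<noteq> 0"
    and hc: "\<And>i. c * q ^ i \<noteq> 1" and hd: "\<And>i. d * q ^ i \<noteq> 1"
  shows "saal_term a b c d q (Suc n) (Suc i) - saal_term a b c (d * q) q n (Suc i)
       = (1 - a) * (1 - b) * q * (d - 1 / (q ^ n * q)) / ((1 - c) * (1 - d) * (1 - d * q))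
         * saal_term (a * q) (b * q) (c * q) (d * q * q) q n i"
proof -
  define u where "u = q ^ i"
  define v where "v = q ^ n"
  define e where "e = 1 - q * u"
  define e' where "e' = 1 - d * q * u"
  define c1 where "c1 = 1 - c"
  define d1 where "d1 = 1 - d"
  define d2 where "d2 = 1 - d * q"
  define X where "X = qp (1 / q ^ n) q i * qp (a * q) q i * qp (b * q) q i
    / (qp q q i * qp (c * q) q i * qp (d * q * q) q i)"
  have nz: "qp q q i \<noteq> 0" "qp (c * q) q i \<noteq> 0" "qp (d * q * q) q i \<noteq> 0" "v \<noteq> 0"
    "e \<noteq> 0" "c1 \<noteq> 0" "d1 \<noteq> 0" "d2 \<noteq> 0" "e' \<noteq> 0"
    using Q[of i] Q[of "Suc i"] hc[of 0] hd[of 0] hd[of 1] hd[of "Suc i"] q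
      qp_nonzeroI[of i "c * q" q] qp_nonzeroI[of i "d * q * q" q] neq_1_shift[OF hc]
      neq_1_shift[OF neq_1_shift[OF hd]]
    by (auto simp: qp_Suc u_def v_def e_def e'_def c1_def d1_def d2_def mult_ac)
  have f: "qp (1 / q ^ Suc n) q (Suc i) = (1 - 1 / (v * q)) * qp (1 / q ^ n) q i"
    "qp a q (Suc i) = (1 - a) * qp (a * q) q i" "qp b q (Suc i) = (1 - b) * qp (b * q) q i"
    "qp c q (Suc i) = c1 * qp (c * q) q i" "qp (d * q) q (Suc i) = d2 * qp (d * q * q) q i"
    using q by (simp_all add: qp_Suc_left v_def c1_def d2_def mult.commute)
  have g: "qp (1 / q ^ n) q (Suc i) = qp (1 / q ^ n) q i * (1 - u / v)" "qp q q (Suc i) = qp q q i * e"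
    "q ^ Suc i = q * u"
    by (simp_all add: qp_Suc u_def v_def e_def)
  have "qp (d * q) q i = d2 * qp (d * q * q) q i / e'"
    using qp_times_q[of "d * q" q i] nz(9) by (simp add: d2_def e'_def u_def field_simps)
  then have h: "qp d q (Suc i) = d1 * (d2 * qp (d * q * q) q i / e')"
    by (simp add: qp_Suc_left d1_def)
  define K where "K = (1 - a) * (1 - b) * q * u * X / (e * c1 * d1 * d2)"
  have t1: "saal_term a b c d q (Suc n) (Suc i) = (1 - 1 / (v * q)) * e' * K"
    unfolding saal_term_def X_def K_def f g h using nz by (simp add: field_simps)
  have t2: "saal_term a b c (d * q) q n (Suc i) = (1 - u / v) * d1 * K"
    unfolding saal_term_def X_def K_def f g using nz by (simp add: field_simps)
  have t3: "saal_term (a * q) (b * q) (c * q) (d * q * q) q n i = u * X"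
    unfolding saal_term_def X_def u_def by simp
  have "saal_term a b c d q (Suc n) (Suc i) - saal_term a b c (d * q) q n (Suc i)
      = ((1 - 1 / (v * q)) * e' - (1 - u / v) * d1) * K"
    unfolding t1 t2 by (simp add: algebra_simps)
  also have "(1 - 1 / (v * q)) * e' - (1 - u / v) * d1 = (d - 1 / (v * q)) * e"
    using q nz(4) by (simp add: e_def e'_def d1_def field_simps)
  also have "(d - 1 / (v * q)) * e * K = (1 - a) * (1 - b) * q * (d - 1 / (v * q)) / (c1 * d1 * d2) * (u * X)"
    unfolding K_def using nz by (simp add: field_simps)
  finally show ?thesis unfolding t3 v_def c1_def d1_def d2_def .
qed

lemma saal_sum_step:
  assumes q: "q \<noteq> 0" and Q: "\<And>n. qp q q n \<noteq> 0"
    and hc: "\<And>i. c * q ^ i \<noteq> 1" and hd: "\<And>i. d * q ^ i \<noteq> 1"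
  shows "(\<Sum>k\<le>Suc n. saal_term a b c d q (Suc n) k) - (\<Sum>k\<le>n. saal_term a b c (d * q) q n k)
       = (1 - a) * (1 - b) * q * (d - 1 / (q ^ n * q)) / ((1 - c) * (1 - d) * (1 - d * q))
         * (\<Sum>k\<le>n. saal_term (a * q) (b * q) (c * q) (d * q * q) q n k)"
proof -
  have "saal_term a b c (d * q) q n (Suc n) = 0"
    unfolding saal_term_def by (subst qp_eq_0I[of _ _ n]) (use q in auto)
  then have "(\<Sum>k\<le>n. saal_term a b c (d * q) q n k) = (\<Sum>k\<le>Suc n. saal_term a b c (d * q) q n k)"
    by simp
  moreover have "saal_term a b c d q (Suc n) 0 = saal_term a b c (d * q) q n 0"
    by (simp add: saal_term_def)
  ultimately show ?thesis
    by (simp add: sum.atMost_Suc_shift sum_subtractf[symmetric] saal_term_step[OF q Q hc hd]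
        sum_distrib_left del: sum.atMost_Suc)
qed

lemma qp_inverse_nonzero:
  assumes q: "q \<noteq> 0" and hd: "\<And>i. d * q ^ i \<noteq> 1"
  shows "qp (1 / (d * q ^ n)) q n \<noteq> 0"
proof (rule qp_nonzeroI)
  fix j assume "j < n"
  then have "d * q ^ (n - j) * q ^ j = d * q ^ n" by (simp add: mult.assoc power_add[symmetric])
  then show "1 / (d * q ^ n) * q ^ j \<noteq> 1" using hd[of "n - j"] hd[of 0] q by (auto simp: field_simps)
qed

lemma saal_prod_ratio_identity:
  fixes a b d q u :: complex
  assumes d: "d \<noteq> 0" "d \<noteq> 1" "d \<noteq> a * b" and q: "q \<noteq> 0" "d * q \<noteq> 1"
    and u: "u \<noteq> 0" "d * u * q \<noteq> 1"
  shows "(1 - b / d) * (1 - a / d) / ((1 - a * b / d) * (1 - 1 / d))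
       = 1 + (1 - a) * (1 - b) * q * (d - 1 / (u * q)) / ((1 - d) * (1 - d * q))
           * ((1 - 1 / (d * q)) / ((1 - a * b / d) * (1 - 1 / (d * u * q))))"
proof -
  define g where "g = d - a * b"
  define h where "h = d - 1"
  have gh: "g \<noteq> 0" "h \<noteq> 0" "1 - a * b / d = g / d" "1 - d = - h" "1 - 1 / d = h / d"
    "1 - b / d = (d - b) / d" "1 - a / d = (d - a) / d"
    using d by (simp_all add: g_def h_def field_simps)
  have "(1 - a) * (1 - b) * q * (d - 1 / (u * q)) / ((1 - d) * (1 - d * q))
        * ((1 - 1 / (d * q)) / ((1 - a * b / d) * (1 - 1 / (d * u * q))))
      = (1 - a) * (1 - b) * q / ((1 - d) * (1 - a * b / d)) * ((d - 1 / (u * q)) / (1 - 1 / (d * u * q)))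
        * ((1 - 1 / (d * q)) / (1 - d * q))"
    by (simp add: divide_inverse inverse_mult_distrib mult_ac)
  also have "(d - 1 / (u * q)) / (1 - 1 / (d * u * q)) = d"
    using d u q by (simp add: field_simps)
  also have "(1 - 1 / (d * q)) / (1 - d * q) = - 1 / (d * q)"
    using d q by (simp add: field_simps)
  also have "(1 - a) * (1 - b) * q / ((1 - d) * (1 - a * b / d)) * d * (- 1 / (d * q))
      = (1 - a) * (1 - b) * d / (g * h)"
    unfolding gh(3,4) using d q gh(1,2) by (simp add: field_simps)
  also have "(1 - a) * (1 - b) * d = (d - a) * (d - b) - g * h"
    by (simp add: g_def h_def algebra_simps)
  also have "((d - a) * (d - b) - g * h) / (g * h) = (d - a) * (d - b) / (g * h) - 1"
    using gh(1,2) by (simp add: diff_divide_distrib)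
  also have "(d - a) * (d - b) / (g * h) = (1 - b / d) * (1 - a / d) / ((1 - a * b / d) * (1 - 1 / d))"
    unfolding gh(3,5-7) using d gh(1,2) by (simp add: field_simps)
  finally show ?thesis by simp
qed

lemma saal_prod_step:
  assumes q: "q \<noteq> 0" and nz: "a \<noteq> 0" "b \<noteq> 0" "c \<noteq> 0"
    and hc: "\<And>i. c * q ^ i \<noteq> 1" and hd: "\<And>i. d * q ^ i \<noteq> 1"
    and rel: "d * c * q ^ Suc n = a * b * q"
  shows "saal_prod a b c q (Suc n) = saal_prod a b c q n
       + (1 - a) * (1 - b) * q * (d - 1 / (q ^ n * q)) / ((1 - c) * (1 - d) * (1 - d * q))
         * saal_prod (a * q) (b * q) (c * q) q n"
proof -
  define u where "u = q ^ n"
  define P where "P = saal_prod a b c q n"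
  have u: "u \<noteq> 0" using q by (simp add: u_def)
  have ab: "a * b = d * c * u" using rel q by (simp add: u_def mult_ac)
  have d: "d \<noteq> 0" using ab nz by auto
  have x: "c / (a * b) = 1 / (d * u)" "c / a * u = b / d" "c / b * u = a / d" "c * u = a * b / d"
    using nz d u by (simp_all add: ab field_simps)
  have ne: "1 - c \<noteq> 0" "d \<noteq> 1" "d * q \<noteq> 1" "d * u * q \<noteq> 1" "d \<noteq> a * b"
    using hc[of 0] hd[of 0] hd[of 1] hd[of "Suc n"] hc[of n] x(4) d by (auto simp: u_def mult_ac field_simps)
  have nz': "qp c q n \<noteq> 0" "qp (1 / (d * u)) q n \<noteq> 0"
    using hc qp_inverse_nonzero[OF q hd] by (simp_all add: qp_nonzero_iff u_def)
  have s1: "saal_prod a b c q (Suc n) = P * ((1 - b / d) * (1 - a / d) / ((1 - a * b / d) * (1 - 1 / d)))"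
    unfolding saal_prod_def P_def qp_Suc x(1) u_def[symmetric] x(2-4)
    using nz' d u by (simp add: field_simps)
  have "(1 - c) * qp (c * q) q n = qp c q n * (1 - a * b / d)"
    using qp_times_q[of c q n] x(4) by (simp add: u_def)
  then have cq: "qp (c * q) q n = qp c q n * (1 - a * b / d) / (1 - c)"
    using ne(1) by (simp add: field_simps)
  have "(1 - 1 / (d * u * q)) * qp (1 / (d * u)) q n = qp (1 / (d * u * q)) q n * (1 - 1 / (d * q))"
    using qp_times_q[of "1 / (d * u * q)" q n] q u by (simp add: u_def field_simps)
  then have xq: "qp (1 / (d * u * q)) q n = (1 - 1 / (d * u * q)) * qp (1 / (d * u)) q n / (1 - 1 / (d * q))"
    using d q ne(3) by (simp add: field_simps)
  have r: "c * q / (a * q) = c / a" "c * q / (b * q) = c / b" "c * q / (a * q * (b * q)) = 1 / (d * u * q)"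
    using q nz x(1) by (simp_all add: field_simps)
  have s2: "saal_prod (a * q) (b * q) (c * q) q n
      = (1 - c) * P * ((1 - 1 / (d * q)) / ((1 - a * b / d) * (1 - 1 / (d * u * q))))"
    unfolding saal_prod_def P_def x(1) r cq xq
    by (simp add: divide_inverse inverse_mult_distrib mult_ac)
  define F2 where "F2 = (1 - 1 / (d * q)) / ((1 - a * b / d) * (1 - 1 / (d * u * q)))"
  define K where "K = (1 - a) * (1 - b) * q * (d - 1 / (u * q))"
  have "saal_prod a b c q (Suc n) = P + K / ((1 - d) * (1 - d * q)) * (P * F2)"
    unfolding s1 saal_prod_ratio_identity[OF d ne(2,5) q ne(3) u ne(4)] F2_def K_def
    by (simp add: algebra_simps)
  also have "K / ((1 - d) * (1 - d * q)) * (P * F2) = K / ((1 - c) * (1 - d) * (1 - d * q)) * ((1 - c) * P * F2)"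
  proof -
    have "x / (y * z) * (y * w) = x / z * w" if "y \<noteq> 0" for x y z w :: complex
      using that by (cases "z = 0") (simp_all add: field_simps)
    from this[OF ne(1), of K "(1 - d) * (1 - d * q)" "P * F2"] show ?thesis
      by (simp only: mult.assoc)
  qed
  finally show ?thesis
    unfolding u_def[symmetric] s2 F2_def[symmetric] P_def[symmetric] K_def by (simp add: mult.commute)
qed

lemma q_pfaff_saalschuetz:
  assumes q: "q \<noteq> 0" and Q: "\<And>n. qp q q n \<noteq> 0"
    and nz: "a \<noteq> 0" "b \<noteq> 0" "c \<noteq> 0" and hc: "\<And>i. c * q ^ i \<noteq> 1" and hd: "\<And>i. d * q ^ i \<noteq> 1"
    and rel: "d * c * q ^ n = a * b * q"
  shows "(\<Sum>k\<le>n. saal_term a b c d q n k) = saal_prod a b c q n"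
  using nz hc hd rel
proof (induction n arbitrary: a b c d)
  case 0
  then show ?case by (simp add: saal_term_def saal_prod_def)
next
  case (Suc n)
  have "(\<Sum>k\<le>n. saal_term a b c (d * q) q n k) = saal_prod a b c q n"
    using Suc.prems neq_1_shift[OF Suc.prems(5)] by (intro Suc.IH) (auto simp: mult_ac)
  moreover have "(\<Sum>k\<le>n. saal_term (a * q) (b * q) (c * q) (d * q * q) q n k) = saal_prod (a * q) (b * q) (c * q) q n"
    using Suc.prems q neq_1_shift[OF Suc.prems(4)] neq_1_shift[OF neq_1_shift[OF Suc.prems(5)]]
    by (intro Suc.IH) (auto simp: mult_ac)
  ultimately show ?case
    using saal_sum_step[OF q Q Suc.prems(4,5), of a b n] saal_prod_step[OF q Suc.prems]
    by (simp add: algebra_simps)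
qed

text \<open>Saalschuetz's sum in the form that expands a well-poised pair \<open>b, c\<close>.\<close>

lemma saalschuetz_wp:
  assumes q: "q \<noteq> 0" and Q: "\<And>n. qp q q n \<noteq> 0" and nz: "a \<noteq> 0" "b \<noteq> 0" "c \<noteq> 0"
    and hb: "\<And>i. a * q / b * q ^ i \<noteq> 1" and hc: "\<And>i. a * q / c * q ^ i \<noteq> 1"
  shows "(\<Sum>j\<le>k. saal_term (a * q ^ k) (a * q / (b * c)) (a * q / b) (a * q / c) q k j)
       = qp b q k * qp c q k / (qp (a * q / b) q k * qp (a * q / c) q k) * (a * q / (b * c)) ^ k"
proof -
  have "(\<Sum>j\<le>k. saal_term (a * q ^ k) (a * q / (b * c)) (a * q / b) (a * q / c) q k j)
      = saal_prod (a * q ^ k) (a * q / (b * c)) (a * q / b) q k"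
    by (rule q_pfaff_saalschuetz[OF q Q]) (use nz q hb hc in \<open>auto simp: field_simps\<close>)
  also have "\<dots> = qp b q k * qp c q k / (qp (a * q / b) q k * qp (a * q / c) q k) * (a * q / (b * c)) ^ k"
  proof -
    have r1: "qp (a * q / b / (a * q ^ k)) q k = (-1 / b) ^ k / qtriangle q k * qp b q k"
      by (rule qp_reverse[OF q nz(2)]) (use q nz in \<open>simp add: field_simps\<close>)
    have e2: "a * q / b / (a * q / (b * c)) = c" using q nz by (simp add: field_simps)
    have r3: "qp (a * q / b / (a * q ^ k * (a * q / (b * c)))) q k
        = (-1 / (a * q / c)) ^ k / qtriangle q k * qp (a * q / c) q k"
      by (rule qp_reverse[OF q]) (use q nz in \<open>simp_all add: field_simps\<close>)
    have nz': "qtriangle q k \<noteq> 0" "qp (a * q / c) q k \<noteq> 0"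
      using qtriangle_nonzero[OF q] hc by (simp_all add: qp_nonzero_iff)
    have pw: "(-1 / b) ^ k / (-1 / (a * q / c)) ^ k = (a * q / (b * c)) ^ k"
      by (simp add: power_divide[symmetric])
    show ?thesis unfolding saal_prod_def r1 e2 r3 using nz' pw[symmetric] by (simp add: field_simps)
  qed
  finally show ?thesis .
qed

lemma sum_triangle_swap:
  fixes f :: "nat \<Rightarrow> nat \<Rightarrow> 'a::comm_monoid_add"
  shows "(\<Sum>k\<le>N. \<Sum>j\<le>k. f k j) = (\<Sum>j\<le>N. \<Sum>m\<le>N - j. f (j + m) j)"
proof -
  have "(\<Sum>(j, m)\<in>{(j, m). j + m \<le> N}. f (j + m) j) = (\<Sum>k\<le>N. \<Sum>j\<le>k. f (j + (k - j)) j)"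
    using sum.triangle_reindex_eq[of "\<lambda>j m. f (j + m) j" N] by simp
  then have "(\<Sum>k\<le>N. \<Sum>j\<le>k. f k j) = (\<Sum>(j, m)\<in>{(j, m). j + m \<le> N}. f (j + m) j)"
    by simp
  also have "{(j, m). j + m \<le> N} = Sigma {..N} (\<lambda>j. {..N - j})" by auto
  finally show ?thesis by (simp add: sum.Sigma)
qed

lemma saalschuetz_interchange:
  assumes q: "q \<noteq> 0" and Q: "\<And>n. qp q q n \<noteq> 0" and nz: "a \<noteq> 0" "b \<noteq> 0" "c \<noteq> 0"
    and hb: "\<And>i. a * q / b * q ^ i \<noteq> 1" and hc: "\<And>i. a * q / c * q ^ i \<noteq> 1"
  shows "(\<Sum>k\<le>N. F k * (qp b q k * qp c q k / (qp (a * q / b) q k * qp (a * q / c) q k) * (a * q / (b * c)) ^ k))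
       = (\<Sum>j\<le>N. qp (a * q / (b * c)) q j / (qp q q j * qp (a * q / b) q j * qp (a * q / c) q j) * q ^ j
            * (\<Sum>m\<le>N - j. F (j + m) * (qp (1 / q ^ (j + m)) q j * qp (a * q ^ (j + m)) q j)))"
proof -
  let ?G = "\<lambda>k j. saal_term (a * q ^ k) (a * q / (b * c)) (a * q / b) (a * q / c) q k j"
  have "(\<Sum>k\<le>N. F k * (qp b q k * qp c q k / (qp (a * q / b) q k * qp (a * q / c) q k) * (a * q / (b * c)) ^ k))
      = (\<Sum>k\<le>N. \<Sum>j\<le>k. F k * ?G k j)"
    unfolding saalschuetz_wp[OF q Q nz hb hc, symmetric] by (simp add: sum_distrib_left)
  also have "\<dots> = (\<Sum>j\<le>N. \<Sum>m\<le>N - j. F (j + m) * ?G (j + m) j)"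
    by (rule sum_triangle_swap)
  also have "\<dots> = (\<Sum>j\<le>N. qp (a * q / (b * c)) q j / (qp q q j * qp (a * q / b) q j * qp (a * q / c) q j) * q ^ j
            * (\<Sum>m\<le>N - j. F (j + m) * (qp (1 / q ^ (j + m)) q j * qp (a * q ^ (j + m)) q j)))"
    by (simp add: saal_term_def sum_distrib_left sum_divide_distrib mult_ac)
  finally show ?thesis .
qed

lemma wp_ratio_add:
  assumes "q \<noteq> 0" "b \<noteq> 0"
  shows "wp_ratio a q b (j + m) = wp_ratio a q b j * wp_ratio (a * q ^ (2 * j)) q (b * q ^ j) m"
proof -
  have "q ^ (2 * j) = q ^ j * q ^ j" by (simp add: mult_2 power_add)
  then have "a * q / b * q ^ j = a * q ^ (2 * j) * q / (b * q ^ j)"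
    using assms by (simp add: field_simps)
  then show ?thesis unfolding wp_ratio_def qp_add by simp
qed

lemma vwp_term_shift:
  assumes q: "q \<noteq> 0" and Q: "\<And>n. qp q q n \<noteq> 0" and jm: "j + m \<le> N"
  shows "vwp_term a q N y (j + m) * (qp (1 / q ^ (j + m)) q j * qp (a * q ^ (j + m)) q j)
       = qp (a * q) q (2 * j) * qp (1 / q ^ N) q j * (-y / q) ^ j / (qtriangle q j * qp (a * q ^ (N + 1)) q j)
         * vwp_term (a * q ^ (2 * j)) q (N - j) (y / q ^ j) m"
proof -
  have j: "j \<le> N" using jm by simp
  have "q ^ N = q ^ j * q ^ (N - j)" using j by (simp add: power_add[symmetric])
  then have i3: "qp (1 / q ^ N) q (j + m) = qp (1 / q ^ N) q j * qp (1 / q ^ (N - j)) q m"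
    using q by (simp add: qp_add)
  have e4: "a * q ^ (N + 1) * q ^ j = a * q ^ (2 * j) * q ^ (N - j + 1)"
    using j by (simp add: power_add[symmetric] mult.assoc add.commute)
  have i4: "qp (a * q ^ (N + 1)) q (j + m) = qp (a * q ^ (N + 1)) q j * qp (a * q ^ (2 * j) * q ^ (N - j + 1)) q m"
    by (simp only: qp_add e4)
  have "-1 / q ^ (m + 1) = (-1 / q) * (1 / q ^ m)" by simp
  then have p1: "(-1 / q ^ (m + 1)) ^ j = (-1 / q) ^ j * (1 / q ^ (j * m))"
    by (simp only: power_mult_distrib) (simp add: power_one_over power_mult[symmetric] mult.commute)
  have p2: "(y / q ^ j) ^ m = y ^ m / q ^ (j * m)" by (simp add: power_divide power_mult)
  have p3: "(-y / q) ^ j = y ^ j * (-1 / q) ^ j" by (simp add: power_mult_distrib[symmetric])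
  have i5: "y ^ (j + m) * (-1 / q ^ (m + 1)) ^ j = (-y / q) ^ j * (y / q ^ j) ^ m"
    unfolding p1 p2 p3 by (simp add: power_add field_simps)
  have "vwp_term a q N y (j + m) * (qp (1 / q ^ (j + m)) q j * qp (a * q ^ (j + m)) q j)
      = (vwp a q (j + m) * qp (a * q ^ (j + m)) q j) * (qp (1 / q ^ (j + m)) q j / qp q q (j + m))
        * qp (1 / q ^ N) q (j + m) / qp (a * q ^ (N + 1)) q (j + m) * y ^ (j + m)"
    by (simp add: vwp_term_def divide_inverse mult_ac)
  also have "\<dots> = qp (a * q) q (2 * j) * vwp (a * q ^ (2 * j)) q m / (qtriangle q j * qp q q m)
        * (qp (1 / q ^ N) q j * qp (1 / q ^ (N - j)) q m)
        / (qp (a * q ^ (N + 1)) q j * qp (a * q ^ (2 * j) * q ^ (N - j + 1)) q m)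
        * (y ^ (j + m) * (-1 / q ^ (m + 1)) ^ j)"
    unfolding vwp_shift qp_inverse_power_div[OF q Q] i3 i4 by (simp add: divide_inverse mult_ac)
  also have "\<dots> = qp (a * q) q (2 * j) * qp (1 / q ^ N) q j * (-y / q) ^ j / (qtriangle q j * qp (a * q ^ (N + 1)) q j)
         * vwp_term (a * q ^ (2 * j)) q (N - j) (y / q ^ j) m"
    unfolding i5 vwp_term_def by (simp add: divide_inverse mult_ac)
  finally show ?thesis .
qed

lemma vwp_4phi3_shifted_sum:
  assumes q: "q \<noteq> 0" and Q: "\<And>n. qp q q n \<noteq> 0" and ha: "\<And>i. a * q ^ Suc i \<noteq> 1" and j: "j \<le> N"
  shows "(\<Sum>m\<le>N - j. vwp_term (a * q ^ (2 * j)) q (N - j) (q ^ N / q ^ j) m) = (if j = N then 1 else 0)"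
proof (cases "j = N")
  case False
  have "q ^ N / q ^ j = q ^ (N - j)" using q j by (simp add: power_diff)
  moreover have "a * q ^ (2 * j) * q ^ (N - j + 1) * q ^ i \<noteq> 1" for i
  proof -
    have "2 * j + (N - j + 1) + i = Suc (j + N + i)" using j by simp
    then have "a * q ^ (2 * j) * q ^ (N - j + 1) * q ^ i = a * q ^ Suc (j + N + i)"
      by (simp only: mult.assoc power_add[symmetric])
    then show ?thesis using ha by metis
  qed
  ultimately show ?thesis
    using vwp_4phi3_sum_eq_0[OF q Q, of "a * q ^ (2 * j)" "N - j"] False j by simp
qed (simp add: vwp_term_def)

lemma terminating_6phi5_coefficient:
  assumes q: "q \<noteq> 0" and Q: "\<And>n. qp q q n \<noteq> 0" and ha: "\<And>i. a * q ^ Suc i \<noteq> 1"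
    and hb: "\<And>i. a * q / b * q ^ i \<noteq> 1" and hc: "\<And>i. a * q / c * q ^ i \<noteq> 1"
  shows "qp (a * q / (b * c)) q N / (qp q q N * qp (a * q / b) q N * qp (a * q / c) q N) * q ^ N
         * (qp (a * q) q (2 * N) * qp (1 / q ^ N) q N * (- (q ^ N) / q) ^ N / (qtriangle q N * qp (a * q ^ (N + 1)) q N))
       = qp (a * q) q N * qp (a * q / (b * c)) q N / (qp (a * q / b) q N * qp (a * q / c) q N)"
proof -
  have c1: "qp (a * q) q (2 * N) = qp (a * q) q N * qp (a * q ^ (N + 1)) q N"
    by (simp add: mult_2 qp_add mult.assoc)
  have c2: "qp (1 / q ^ N) q N = (-1 / q) ^ N / qtriangle q N * qp q q N"
    by (rule qp_reverse[OF q]) (use q in simp_all)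
  have "- (q ^ N) / q = q ^ N * (-1 / q)" by simp
  then have c3: "(- (q ^ N) / q) ^ N = qtriangle q N * qtriangle q N * q ^ N * (-1 / q) ^ N"
    unfolding qtriangle_square by (simp only: power_mult_distrib power_mult)
  have "qp (a * q / b) q N \<noteq> 0" "qp (a * q / c) q N \<noteq> 0" "qp (a * q ^ (N + 1)) q N \<noteq> 0"
    using hb hc ha by (auto simp: qp_nonzero_iff mult.assoc power_add[symmetric])
  moreover have "(-1 / q) ^ N * (-1 / q) ^ N * q ^ N * q ^ N = 1"
    using q by (simp add: power_mult_distrib[symmetric])
  ultimately show ?thesis
    unfolding c1 c2 c3 using Q[of N] qtriangle_nonzero[OF q, of N] q by (simp add: field_simps)
qed

lemma terminating_6phi5_sum:
  assumes q: "q \<noteq> 0" and Q: "\<And>n. qp q q n \<noteq> 0" and nz: "a \<noteq> 0" "b \<noteq> 0" "c \<noteq> 0"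
    and ha: "\<And>i. a * q ^ Suc i \<noteq> 1"
    and hb: "\<And>i. a * q / b * q ^ i \<noteq> 1" and hc: "\<And>i. a * q / c * q ^ i \<noteq> 1"
  shows "(\<Sum>k\<le>N. vwp_term a q N (a * q ^ (N + 1) / (b * c)) k * wp_ratio a q b k * wp_ratio a q c k)
       = qp (a * q) q N * qp (a * q / (b * c)) q N / (qp (a * q / b) q N * qp (a * q / c) q N)"
proof -
  define L where "L j = qp (a * q / (b * c)) q j / (qp q q j * qp (a * q / b) q j * qp (a * q / c) q j) * q ^ j" for j
  define C where "C j = qp (a * q) q (2 * j) * qp (1 / q ^ N) q j * (- (q ^ N) / q) ^ j
    / (qtriangle q j * qp (a * q ^ (N + 1)) q j)" for j
  have y: "a * q ^ (N + 1) / (b * c) = q ^ N * (a * q / (b * c))" by (simp add: mult_ac)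
  have "(\<Sum>k\<le>N. vwp_term a q N (a * q ^ (N + 1) / (b * c)) k * wp_ratio a q b k * wp_ratio a q c k)
      = (\<Sum>k\<le>N. vwp_term a q N (q ^ N) k
           * (qp b q k * qp c q k / (qp (a * q / b) q k * qp (a * q / c) q k) * (a * q / (b * c)) ^ k))"
    unfolding y vwp_term_mult_power wp_ratio_def by (simp add: mult_ac)
  also have "\<dots> = (\<Sum>j\<le>N. L j * (\<Sum>m\<le>N - j. vwp_term a q N (q ^ N) (j + m)
                      * (qp (1 / q ^ (j + m)) q j * qp (a * q ^ (j + m)) q j)))"
    unfolding saalschuetz_interchange[OF q Q nz hb hc] L_def ..
  also have "\<dots> = (\<Sum>j\<le>N. if j = N then L j * C j else 0)"
  proof (rule sum.cong[OF refl])
    fix j assume "j \<in> {..N}"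
    then have j: "j \<le> N" by simp
    have "(\<Sum>m\<le>N - j. vwp_term a q N (q ^ N) (j + m) * (qp (1 / q ^ (j + m)) q j * qp (a * q ^ (j + m)) q j))
        = C j * (\<Sum>m\<le>N - j. vwp_term (a * q ^ (2 * j)) q (N - j) (q ^ N / q ^ j) m)"
      unfolding sum_distrib_left
      by (rule sum.cong[OF refl]) (use j in \<open>simp add: vwp_term_shift[OF q Q] C_def\<close>)
    then show "L j * (\<Sum>m\<le>N - j. vwp_term a q N (q ^ N) (j + m) * (qp (1 / q ^ (j + m)) q j * qp (a * q ^ (j + m)) q j))
        = (if j = N then L j * C j else 0)"
      by (simp add: vwp_4phi3_shifted_sum[OF q Q ha j] del: sum.atMost_Suc)
  qed
  also have "\<dots> = L N * C N" by (simp add: sum.delta)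
  finally show ?thesis
    unfolding L_def C_def terminating_6phi5_coefficient[OF q Q ha hb hc] .
qed

lemma watson_coefficient:
  assumes q: "q \<noteq> 0" and Q: "\<And>n. qp q q n \<noteq> 0" and nz: "A \<noteq> 0" "u \<noteq> 0" "v \<noteq> 0"
    and hA: "\<And>i. A * q ^ Suc i \<noteq> 1"
    and hs: "\<And>i. A * q / s * q ^ i \<noteq> 1" and ht: "\<And>i. A * q / t * q ^ i \<noteq> 1"
    and hu: "\<And>i. A * q / u * q ^ i \<noteq> 1" and hv: "\<And>i. A * q / v * q ^ i \<noteq> 1"
    and hw: "qp (u * v / (A * q ^ N)) q j \<noteq> 0" and j: "j \<le> N"
  shows "qp (A * q / (s * t)) q j / (qp q q j * qp (A * q / s) q j * qp (A * q / t) q j) * q ^ j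
         * (qp (A * q) q (2 * j) * qp (1 / q ^ N) q j * (- (A * q ^ (N + 1) / (u * v)) / q) ^ j
            / (qtriangle q j * qp (A * q ^ (N + 1)) q j))
         * (wp_ratio A q u j * wp_ratio A q v j)
         * (qp (A * q ^ (2 * j) * q) q (N - j) * qp (A * q / (u * v)) q (N - j)
            / (qp (A * q / u * q ^ j) q (N - j) * qp (A * q / v * q ^ j) q (N - j)))
       = qp (A * q) q N * qp (A * q / (u * v)) q N / (qp (A * q / u) q N * qp (A * q / v) q N)
         * (qp (1 / q ^ N) q j * qp u q j * qp v q j * qp (A * q / (s * t)) q j
            / (qp q q j * qp (A * q / s) q j * qp (A * q / t) q j * qp (u * v / (A * q ^ N)) q j) * q ^ j)"
proof -
  define w where "w = u * v / (A * q ^ N)"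
  have c1: "qp (A * q) q N = qp (A * q) q (2 * j) * qp (A * q ^ (2 * j) * q) q (N - j) / qp (A * q ^ (N + 1)) q j"
    and n1: "qp (A * q ^ (N + 1)) q j \<noteq> 0"
  proof -
    have "qp (A * q) q (2 * j) * qp (A * q ^ (2 * j) * q) q (N - j) = qp (A * q) q (2 * j + (N - j))"
      by (simp add: qp_add mult_ac)
    also have "2 * j + (N - j) = N + j" using j by simp
    also have "qp (A * q) q (N + j) = qp (A * q) q N * qp (A * q ^ (N + 1)) q j"
      by (simp add: qp_add mult_ac)
    finally have "qp (A * q) q (2 * j) * qp (A * q ^ (2 * j) * q) q (N - j) = qp (A * q) q N * qp (A * q ^ (N + 1)) q j" .
    moreover show n1: "qp (A * q ^ (N + 1)) q j \<noteq> 0"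
      using hA by (simp add: qp_nonzero_iff mult.assoc power_add[symmetric])
    ultimately show "qp (A * q) q N = qp (A * q) q (2 * j) * qp (A * q ^ (2 * j) * q) q (N - j) / qp (A * q ^ (N + 1)) q j"
      by (simp add: field_simps)
  qed
  have c2: "qp (A * q / x) q N = qp (A * q / x) q j * qp (A * q / x * q ^ j) q (N - j)" for x
    using j qp_add[of "A * q / x" q j "N - j"] by simp
  have c4: "qp (A * q / (u * v)) q N = qp (A * q / (u * v)) q (N - j) * ((- (A * q ^ (N + 1) / (u * v)) / q) ^ j / qtriangle q j * qp w q j)"
  proof -
    have "qp (A * q / (u * v)) q N = qp (A * q / (u * v)) q (N - j) * qp (A * q / (u * v) * q ^ (N - j)) q j"
      using j qp_add[of "A * q / (u * v)" q "N - j" j] by simp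
    also have "qp (A * q / (u * v) * q ^ (N - j)) q j = (-1 / w) ^ j / qtriangle q j * qp w q j"
    proof (rule qp_reverse[OF q])
      show "w \<noteq> 0" unfolding w_def using nz q by simp
      have "q ^ N = q ^ (N - j) * q ^ j" using j by (simp add: power_add[symmetric])
      then show "A * q / (u * v) * q ^ (N - j) * w * q ^ j = q"
        unfolding w_def using nz q by (simp add: field_simps)
    qed
    also have "-1 / w = - (A * q ^ (N + 1) / (u * v)) / q" unfolding w_def using nz q by (simp add: field_simps)
    finally show ?thesis .
  qed
  have nz': "qp (A * q / u) q N \<noteq> 0" "qp (A * q / v) q N \<noteq> 0" "qp (A * q / s) q j \<noteq> 0" "qp (A * q / t) q j \<noteq> 0"
    using hu hv hs ht by (simp_all add: qp_nonzero_iff)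
  then have "qp (A * q / u * q ^ j) q (N - j) \<noteq> 0" "qp (A * q / u) q j \<noteq> 0"
    "qp (A * q / v * q ^ j) q (N - j) \<noteq> 0" "qp (A * q / v) q j \<noteq> 0"
    using c2[of u] c2[of v] by auto
  then show ?thesis
    unfolding wp_ratio_def c4 c1 c2[of u] c2[of v] w_def[symmetric]
    using qtriangle_nonzero[OF q, of j] n1 hw nz' Q[of j] q by (simp add: w_def[symmetric] field_simps)
qed

lemma watson_inner_sum:
  assumes q: "q \<noteq> 0" and Q: "\<And>n. qp q q n \<noteq> 0" and nz: "A \<noteq> 0" "u \<noteq> 0" "v \<noteq> 0"
    and hA: "\<And>i. A * q ^ Suc i \<noteq> 1"
    and hu: "\<And>i. A * q / u * q ^ i \<noteq> 1" and hv: "\<And>i. A * q / v * q ^ i \<noteq> 1" and j: "j \<le> N"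
  shows "(\<Sum>m\<le>N - j. vwp_term (A * q ^ (2 * j)) q (N - j) (A * q ^ (N + 1) / (u * v) / q ^ j) m
        * wp_ratio (A * q ^ (2 * j)) q (u * q ^ j) m * wp_ratio (A * q ^ (2 * j)) q (v * q ^ j) m)
      = qp (A * q ^ (2 * j) * q) q (N - j) * qp (A * q / (u * v)) q (N - j)
        / (qp (A * q / u * q ^ j) q (N - j) * qp (A * q / v * q ^ j) q (N - j))"
proof -
  have qj: "q ^ (2 * j) = q ^ j * q ^ j" by (simp add: mult_2 power_add)
  have "q ^ (N + 1) = q ^ j * q ^ (N - j + 1)" using j by (simp add: power_add[symmetric])
  then have "A * q ^ (N + 1) / (u * v) / q ^ j = A * q ^ (2 * j) * q ^ (N - j + 1) / (u * q ^ j * (v * q ^ j))"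
    unfolding qj using q nz by (simp add: field_simps)
  moreover have "A * q ^ (2 * j) * q / (u * q ^ j * (v * q ^ j)) = A * q / (u * v)"
    "A * q ^ (2 * j) * q / (u * q ^ j) = A * q / u * q ^ j" "A * q ^ (2 * j) * q / (v * q ^ j) = A * q / v * q ^ j"
    unfolding qj using q nz by (simp_all add: field_simps)
  moreover have "A * q ^ (2 * j) * q ^ Suc i \<noteq> 1" for i
    using hA[of "2 * j + i"] by (simp add: power_add mult_ac)
  moreover have "A * q / u * q ^ j * q ^ i \<noteq> 1" "A * q / v * q ^ j * q ^ i \<noteq> 1" for i
    using hu[of "j + i"] hv[of "j + i"] by (simp_all add: power_add mult.assoc)
  ultimately show ?thesis
    using terminating_6phi5_sum[OF q Q, of "A * q ^ (2 * j)" "u * q ^ j" "v * q ^ j" "N - j"] q nz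
    by (simp add: Suc_diff_le j)
qed

lemma watson_summand_shift:
  assumes q: "q \<noteq> 0" and Q: "\<And>n. qp q q n \<noteq> 0" and nz: "u \<noteq> 0" "v \<noteq> 0" and jm: "j + m \<le> N"
  shows "vwp_term A q N y (j + m) * wp_ratio A q u (j + m) * wp_ratio A q v (j + m)
           * (qp (1 / q ^ (j + m)) q j * qp (A * q ^ (j + m)) q j)
       = qp (A * q) q (2 * j) * qp (1 / q ^ N) q j * (- y / q) ^ j / (qtriangle q j * qp (A * q ^ (N + 1)) q j)
           * (wp_ratio A q u j * wp_ratio A q v j)
           * (vwp_term (A * q ^ (2 * j)) q (N - j) (y / q ^ j) m
              * wp_ratio (A * q ^ (2 * j)) q (u * q ^ j) m * wp_ratio (A * q ^ (2 * j)) q (v * q ^ j) m)"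
proof -
  have "vwp_term A q N y (j + m) * wp_ratio A q u (j + m) * wp_ratio A q v (j + m)
          * (qp (1 / q ^ (j + m)) q j * qp (A * q ^ (j + m)) q j)
      = wp_ratio A q u (j + m) * wp_ratio A q v (j + m)
          * (vwp_term A q N y (j + m) * (qp (1 / q ^ (j + m)) q j * qp (A * q ^ (j + m)) q j))"
    by (simp only: mult_ac)
  then show ?thesis
    unfolding vwp_term_shift[OF q Q jm] wp_ratio_add[OF q nz(1)] wp_ratio_add[OF q nz(2)]
    by (simp only: mult_ac)
qed

lemma watson_transformation:
  assumes q: "q \<noteq> 0" and Q: "\<And>n. qp q q n \<noteq> 0"
    and nz: "A \<noteq> 0" "s \<noteq> 0" "t \<noteq> 0" "u \<noteq> 0" "v \<noteq> 0" and hA: "\<And>i. A * q ^ Suc i \<noteq> 1"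
    and hs: "\<And>i. A * q / s * q ^ i \<noteq> 1" and ht: "\<And>i. A * q / t * q ^ i \<noteq> 1"
    and hu: "\<And>i. A * q / u * q ^ i \<noteq> 1" and hv: "\<And>i. A * q / v * q ^ i \<noteq> 1"
    and hw: "\<And>j. j \<le> N \<Longrightarrow> qp (u * v / (A * q ^ N)) q j \<noteq> 0"
  shows "(\<Sum>k\<le>N. vwp_term A q N (A\<^sup>2 * q ^ (N + 2) / (s * t * u * v)) k
            * wp_ratio A q s k * wp_ratio A q t k * wp_ratio A q u k * wp_ratio A q v k)
     = qp (A * q) q N * qp (A * q / (u * v)) q N / (qp (A * q / u) q N * qp (A * q / v) q N)
       * (\<Sum>j\<le>N. qp (1 / q ^ N) q j * qp u q j * qp v q j * qp (A * q / (s * t)) q j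
            / (qp q q j * qp (A * q / s) q j * qp (A * q / t) q j * qp (u * v / (A * q ^ N)) q j) * q ^ j)"
  (is "_ = ?P * (\<Sum>j\<le>N. ?R j)")
proof -
  define y where "y = A * q ^ (N + 1) / (u * v)"
  define F where "F k = vwp_term A q N y k * wp_ratio A q u k * wp_ratio A q v k" for k
  define L where "L j = qp (A * q / (s * t)) q j / (qp q q j * qp (A * q / s) q j * qp (A * q / t) q j) * q ^ j" for j
  define C where "C j = qp (A * q) q (2 * j) * qp (1 / q ^ N) q j * (- y / q) ^ j
    / (qtriangle q j * qp (A * q ^ (N + 1)) q j)" for j
  define I where "I j m = vwp_term (A * q ^ (2 * j)) q (N - j) (y / q ^ j) m
    * wp_ratio (A * q ^ (2 * j)) q (u * q ^ j) m * wp_ratio (A * q ^ (2 * j)) q (v * q ^ j) m" for j m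
  have y: "A\<^sup>2 * q ^ (N + 2) / (s * t * u * v) = y * (A * q / (s * t))"
    unfolding y_def by (simp add: power2_eq_square power_add mult_ac)
  have "(\<Sum>k\<le>N. vwp_term A q N (A\<^sup>2 * q ^ (N + 2) / (s * t * u * v)) k
            * wp_ratio A q s k * wp_ratio A q t k * wp_ratio A q u k * wp_ratio A q v k)
      = (\<Sum>k\<le>N. F k * (qp s q k * qp t q k / (qp (A * q / s) q k * qp (A * q / t) q k) * (A * q / (s * t)) ^ k))"
    unfolding y F_def vwp_term_mult_power wp_ratio_def by (simp add: mult_ac)
  also have "\<dots> = (\<Sum>j\<le>N. L j * (\<Sum>m\<le>N - j. F (j + m) * (qp (1 / q ^ (j + m)) q j * qp (A * q ^ (j + m)) q j)))"
    unfolding saalschuetz_interchange[OF q Q nz(1-3) hs ht] L_def ..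
  also have "\<dots> = (\<Sum>j\<le>N. ?P * ?R j)"
  proof (rule sum.cong[OF refl])
    fix j assume "j \<in> {..N}"
    then have j: "j \<le> N" by simp
    have "(\<Sum>m\<le>N - j. F (j + m) * (qp (1 / q ^ (j + m)) q j * qp (A * q ^ (j + m)) q j))
        = C j * (wp_ratio A q u j * wp_ratio A q v j) * (\<Sum>m\<le>N - j. I j m)"
      unfolding sum_distrib_left F_def C_def I_def
      by (rule sum.cong[OF refl]) (use j in \<open>simp add: watson_summand_shift[OF q Q nz(4,5)]\<close>)
    then show "L j * (\<Sum>m\<le>N - j. F (j + m) * (qp (1 / q ^ (j + m)) q j * qp (A * q ^ (j + m)) q j)) = ?P * ?R j"
      using watson_coefficient[OF q Q nz(1,4,5) hA hs ht hu hv hw[OF j] j]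
      unfolding I_def y_def watson_inner_sum[OF q Q nz(1,4,5) hA hu hv j] L_def C_def
      by (simp only: mult.assoc)
  qed
  also have "\<dots> = ?P * (\<Sum>j\<le>N. ?R j)" by (simp add: sum_distrib_left)
  finally show ?thesis .
qed

lemma qp_tendsto_prodinf:
  assumes "norm q < 1"
  shows "(\<lambda>n. qp a q n) \<longlonglongrightarrow> (\<Prod>j. 1 - a * q ^ j)"
proof -
  have "summable (\<lambda>j. norm a * norm q ^ j)"
    using assms by (intro summable_mult summable_geometric) simp
  then have "summable (\<lambda>j. norm ((1 - a * q ^ j) - 1))" by (simp add: norm_mult norm_power)
  then have "convergent_prod (\<lambda>j. 1 - a * q ^ j)"
    by (intro abs_convergent_prod_imp_convergent_prod) (simp add: abs_convergent_prod_conv_summable)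
  then have "(\<lambda>n. \<Prod>j\<le>n. 1 - a * q ^ j) \<longlonglongrightarrow> (\<Prod>j. 1 - a * q ^ j)"
    by (rule convergent_prod_LIMSEQ)
  then show ?thesis unfolding qp_def by (simp add: LIMSEQ_lessThan_iff_atMost)
qed

lemma qpoch_inf_split:
  assumes "norm q < 1"
  shows "qpoch_inf a q = qp a q m * qpoch_inf (a * q ^ m) q"
proof -
  have lim: "qpoch_inf x q = (\<Prod>j. 1 - x * q ^ j)" for x
    unfolding qpoch_inf_def qpoch_of_nat by (rule limI[OF qp_tendsto_prodinf[OF assms]])
  have "(\<lambda>n. qp a q (n + m)) \<longlonglongrightarrow> qpoch_inf a q"
    unfolding lim using qp_tendsto_prodinf[OF assms] by (rule LIMSEQ_ignore_initial_segment)
  moreover have "(\<lambda>n. qp a q (n + m)) \<longlonglongrightarrow> qp a q m * qpoch_inf (a * q ^ m) q"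
    unfolding lim add.commute[of _ m] qp_add by (intro tendsto_mult_left qp_tendsto_prodinf[OF assms])
  ultimately show ?thesis by (rule LIMSEQ_unique)
qed

lemma qpoch_neg_int: "qpoch a q (- int m) = 1 / (\<Prod>j\<in>{1..m}. 1 - a / q ^ j)"
  by (cases "m = 0") (simp_all add: qpoch_def)

lemma prod_inverse_powers_reflect:
  assumes q: "q \<noteq> 0" and a: "a \<noteq> 0"
  shows "(\<Prod>j\<in>{1..m}. 1 - a / q ^ j) = (- a / q) ^ m * qp (q / a) q m / qtriangle q m"
proof (induction m)
  case (Suc m)
  have "(\<Prod>j\<in>{1..Suc m}. 1 - a / q ^ j) = (\<Prod>j\<in>{1..m}. 1 - a / q ^ j) * (1 - a / q ^ Suc m)"
    by simp
  also have "\<dots> = (- a / q) ^ m * qp (q / a) q m / qtriangle q m * (1 - a / q ^ Suc m)"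
    unfolding Suc.IH ..
  also have "\<dots> = (- a / q) ^ Suc m * qp (q / a) q (Suc m) / qtriangle q (Suc m)"
    unfolding qp_Suc qtriangle_Suc using q a qtriangle_nonzero[OF q, of m] by (simp add: field_simps)
  finally show ?case .
qed (simp add: qtriangle_def)

lemma qpoch_neg_ratio:
  assumes q: "q \<noteq> 0" and a: "a \<noteq> 0"
  shows "qpoch (q / a) q (- int m) / qpoch a q (- int m) = (a\<^sup>2 / q) ^ m * qp (q / a) q m / qp a q m"
proof -
  have qa: "q / a \<noteq> 0" "q / (q / a) = a" using q a by simp_all
  have "qpoch (q / a) q (- int m) / qpoch a q (- int m)
      = (- a / q) ^ m * qp (q / a) q m / ((- (q / a) / q) ^ m * qp a q m)"
    unfolding qpoch_neg_int prod_inverse_powers_reflect[OF q a] prod_inverse_powers_reflect[OF q qa(1)] qa(2)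
    using qtriangle_nonzero[OF q, of m] by (simp add: field_simps)
  also have "\<dots> = ((- a / q) ^ m / (- (q / a) / q) ^ m) * qp (q / a) q m / qp a q m"
    by (simp only: times_divide_times_eq[symmetric] times_divide_eq_right)
  also have "(- a / q) ^ m / (- (q / a) / q) ^ m = ((- a / q) / (- (q / a) / q)) ^ m"
    by (rule power_divide[symmetric])
  also have "(- a / q) / (- (q / a) / q) = a\<^sup>2 / q"
    using q a by (simp add: field_simps power2_eq_square)
  finally show ?thesis .
qed

lemma qpoch_neg_ratio_shift:
  assumes q: "q \<noteq> 0" and a: "a \<noteq> 0" "a \<noteq> 1"
  shows "qpoch (q / a) q (- int (Suc m)) / qpoch (a * q) q (- int (Suc m))
       = - (a ^ (2 * m + 1)) * qp (q / a) q m / qp (a * q) q m"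
proof -
  have qa: "q / a \<noteq> 0" "a * q \<noteq> 0" "q / (q / a) = a" "q / (a * q) = 1 / a" using q a by simp_all
  have "qpoch (q / a) q (- int (Suc m)) / qpoch (a * q) q (- int (Suc m))
      = (- (a * q) / q) ^ Suc m * qp (1 / a) q (Suc m) / ((- (q / a) / q) ^ Suc m * qp a q (Suc m))"
    unfolding qpoch_neg_int prod_inverse_powers_reflect[OF q qa(1)] prod_inverse_powers_reflect[OF q qa(2)] qa(3,4)
    using qtriangle_nonzero[OF q, of "Suc m"] by (simp add: field_simps)
  also have "\<dots> = ((- (a * q) / q) ^ Suc m / (- (q / a) / q) ^ Suc m) * ((1 - 1 / a) / (1 - a))
      * (qp (q / a) q m / qp (a * q) q m)"
    unfolding qp_Suc_left by (simp only: times_divide_times_eq[symmetric] mult.assoc times_divide_eq_left mult_1)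
  also have "(- (a * q) / q) ^ Suc m / (- (q / a) / q) ^ Suc m = ((- (a * q) / q) / (- (q / a) / q)) ^ Suc m"
    by (rule power_divide[symmetric])
  also have "(- (a * q) / q) / (- (q / a) / q) = a * a"
    using q a by (simp add: field_simps)
  also have "(1 - 1 / a) / (1 - a) = - 1 / a"
    using a by (simp add: field_simps)
  also have "(a * a) ^ Suc m * (- 1 / a) = - (a ^ (2 * m + 1))"
    using a by (simp add: power_mult_distrib mult_2 power_add)
  finally show ?thesis by simp
qed

lemma infsum_int_finite_support:
  fixes f :: "int \<Rightarrow> 'a::{comm_monoid_add, t2_space}"
  assumes vanish_pos: "\<And>m. N < m \<Longrightarrow> f (int m) = 0"
    and vanish_neg: "\<And>m. M < m \<Longrightarrow> f (- int m) = 0"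
  shows "(\<Sum>\<^sub>\<infinity>k. f k) = (\<Sum>m\<le>N. f (int m)) + (\<Sum>m\<in>{1..M}. f (- int m))"
proof -
  define S where "S = int ` {..N} \<union> (\<lambda>m. - int m) ` {1..M}"
  have "(\<Sum>\<^sub>\<infinity>k. f k) = (\<Sum>\<^sub>\<infinity>k\<in>S. f k)"
  proof (rule infsum_cong_neutral)
    fix k assume k: "k \<in> UNIV - S"
    show "f k = 0"
    proof (cases k rule: int_cases)
      case (nonneg m)
      with k have "N < m" by (auto simp: S_def)
      with nonneg show ?thesis using vanish_pos by simp
    next
      case (neg m)
      then have "k = (\<lambda>m. - int m) (Suc m)" by simp
      with k have "Suc m \<notin> {1..M}" unfolding S_def by blast
      then show ?thesis using neg vanish_neg[of "Suc m"] by simp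
    qed
  qed auto
  also have "\<dots> = sum f S" by (simp add: S_def)
  also have "\<dots> = sum f (int ` {..N}) + sum f ((\<lambda>m. - int m) ` {1..M})"
    unfolding S_def by (rule sum.union_disjoint) auto
  also have "\<dots> = (\<Sum>m\<le>N. f (int m)) + (\<Sum>m\<in>{1..M}. f (- int m))"
    by (simp add: sum.reindex inj_on_def)
  finally show ?thesis .
qed

definition psi55_term :: "complex \<Rightarrow> complex \<Rightarrow> complex \<Rightarrow> complex \<Rightarrow> complex \<Rightarrow> complex \<Rightarrow> int \<Rightarrow> complex" where
  "psi55_term a b c d e q k =
     qpoch (q/a) q k * qpoch (q/b) q k * qpoch (q/c) q k * qpoch (q/d) q k * qpoch (q/e) q k
     / (qpoch a q k * qpoch b q k * qpoch c q k * qpoch d q k * qpoch e q k) * (a*b*c*d*e / q^3) powi k"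

definition psi55_term_q :: "complex \<Rightarrow> complex \<Rightarrow> complex \<Rightarrow> complex \<Rightarrow> complex \<Rightarrow> complex \<Rightarrow> int \<Rightarrow> complex" where
  "psi55_term_q a b c d e q k =
     qpoch (q/a) q k * qpoch (q/b) q k * qpoch (q/c) q k * qpoch (q/d) q k * qpoch (q/e) q k
     / (qpoch (a*q) q k * qpoch (b*q) q k * qpoch (c*q) q k * qpoch (d*q) q k * qpoch (e*q) q k) * (a*b*c*d*e / q) powi k"

lemma psi55_term_reflect:
  assumes q: "q \<noteq> 0" and nz: "a \<noteq> 0" "b \<noteq> 0" "c \<noteq> 0" "d \<noteq> 0" "e \<noteq> 0"
  shows "psi55_term a b c d e q (- int m) = q ^ m * psi55_term a b c d e q (int m)"
proof -
  define z where "z = a * b * c * d * e / q ^ 3"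
  have z: "z \<noteq> 0" using q nz by (simp add: z_def)
  have "a\<^sup>2 / q * (b\<^sup>2 / q) * (c\<^sup>2 / q) * (d\<^sup>2 / q) * (e\<^sup>2 / q) = q * z * z"
    unfolding z_def using q by (simp add: field_simps power2_eq_square power3_eq_cube)
  then have pw: "(a\<^sup>2 / q) ^ m * (b\<^sup>2 / q) ^ m * (c\<^sup>2 / q) ^ m * (d\<^sup>2 / q) ^ m * (e\<^sup>2 / q) ^ m = q ^ m * z ^ m * z ^ m"
    by (metis power_mult_distrib)
  have "psi55_term a b c d e q (- int m)
      = qpoch (q/a) q (- int m) / qpoch a q (- int m) * (qpoch (q/b) q (- int m) / qpoch b q (- int m))
        * (qpoch (q/c) q (- int m) / qpoch c q (- int m)) * (qpoch (q/d) q (- int m) / qpoch d q (- int m))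
        * (qpoch (q/e) q (- int m) / qpoch e q (- int m)) / z ^ m"
    unfolding psi55_term_def z_def[symmetric] by (simp add: power_int_minus divide_inverse mult_ac)
  also have "\<dots> = (a\<^sup>2 / q) ^ m * (b\<^sup>2 / q) ^ m * (c\<^sup>2 / q) ^ m * (d\<^sup>2 / q) ^ m * (e\<^sup>2 / q) ^ m
      * (qp (q/a) q m * qp (q/b) q m * qp (q/c) q m * qp (q/d) q m * qp (q/e) q m
         / (qp a q m * qp b q m * qp c q m * qp d q m * qp e q m)) / z ^ m"
    unfolding qpoch_neg_ratio[OF q nz(1)] qpoch_neg_ratio[OF q nz(2)] qpoch_neg_ratio[OF q nz(3)]
      qpoch_neg_ratio[OF q nz(4)] qpoch_neg_ratio[OF q nz(5)]
    by (simp add: divide_inverse mult_ac)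
  also have "\<dots> = q ^ m * (qp (q/a) q m * qp (q/b) q m * qp (q/c) q m * qp (q/d) q m * qp (q/e) q m
      / (qp a q m * qp b q m * qp c q m * qp d q m * qp e q m) * z ^ m)"
    unfolding pw using z by (simp add: field_simps)
  also have "\<dots> = q ^ m * psi55_term a b c d e q (int m)"
    by (simp add: psi55_term_def z_def qpoch_of_nat)
  finally show ?thesis .
qed

lemma psi55_term_q_reflect:
  assumes q: "q \<noteq> 0" and nz: "a \<noteq> 0" "b \<noteq> 0" "c \<noteq> 0" "d \<noteq> 0" "e \<noteq> 0"
    and ne: "a \<noteq> 1" "b \<noteq> 1" "c \<noteq> 1" "d \<noteq> 1" "e \<noteq> 1"
  shows "psi55_term_q a b c d e q (- int (Suc m)) = - (q ^ (2 * m + 1)) * psi55_term_q a b c d e q (int m)"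
proof -
  define z where "z = a * b * c * d * e / q"
  have z: "z \<noteq> 0" using q nz by (simp add: z_def)
  have "- (a ^ (2 * m + 1)) * - (b ^ (2 * m + 1)) * - (c ^ (2 * m + 1)) * - (d ^ (2 * m + 1)) * - (e ^ (2 * m + 1))
      = - ((q * z) ^ (2 * m + 1))"
    unfolding z_def using q by (simp add: power_mult_distrib)
  also have "(q * z) ^ (2 * m + 1) = q ^ (2 * m + 1) * z ^ m * z ^ Suc m"
    by (simp add: power_mult_distrib power_add mult_2)
  finally have pw: "- (a ^ (2 * m + 1)) * - (b ^ (2 * m + 1)) * - (c ^ (2 * m + 1)) * - (d ^ (2 * m + 1)) * - (e ^ (2 * m + 1))
      = - (q ^ (2 * m + 1) * z ^ m * z ^ Suc m)" .
  have "psi55_term_q a b c d e q (- int (Suc m))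
      = qpoch (q/a) q (- int (Suc m)) / qpoch (a*q) q (- int (Suc m)) * (qpoch (q/b) q (- int (Suc m)) / qpoch (b*q) q (- int (Suc m)))
        * (qpoch (q/c) q (- int (Suc m)) / qpoch (c*q) q (- int (Suc m))) * (qpoch (q/d) q (- int (Suc m)) / qpoch (d*q) q (- int (Suc m)))
        * (qpoch (q/e) q (- int (Suc m)) / qpoch (e*q) q (- int (Suc m))) / z ^ Suc m"
    unfolding psi55_term_q_def z_def[symmetric] by (simp only: power_int_minus power_int_of_nat) (simp add: divide_inverse mult_ac)
  also have "\<dots> = - (a ^ (2 * m + 1)) * - (b ^ (2 * m + 1)) * - (c ^ (2 * m + 1)) * - (d ^ (2 * m + 1)) * - (e ^ (2 * m + 1))
      * (qp (q/a) q m * qp (q/b) q m * qp (q/c) q m * qp (q/d) q m * qp (q/e) q m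
         / (qp (a*q) q m * qp (b*q) q m * qp (c*q) q m * qp (d*q) q m * qp (e*q) q m)) / z ^ Suc m"
    unfolding qpoch_neg_ratio_shift[OF q nz(1) ne(1)] qpoch_neg_ratio_shift[OF q nz(2) ne(2)]
      qpoch_neg_ratio_shift[OF q nz(3) ne(3)] qpoch_neg_ratio_shift[OF q nz(4) ne(4)]
      qpoch_neg_ratio_shift[OF q nz(5) ne(5)]
    by (simp add: divide_inverse mult_ac)
  also have "\<dots> = - (q ^ (2 * m + 1)) * (qp (q/a) q m * qp (q/b) q m * qp (q/c) q m * qp (q/d) q m * qp (q/e) q m
      / (qp (a*q) q m * qp (b*q) q m * qp (c*q) q m * qp (d*q) q m * qp (e*q) q m) * z ^ m)"
    unfolding pw using z by (simp add: field_simps)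
  also have "\<dots> = - (q ^ (2 * m + 1)) * psi55_term_q a b c d e q (int m)"
    by (simp add: psi55_term_q_def z_def qpoch_of_nat)
  finally show ?thesis .
qed

lemma vwp_1_div_qp:
  assumes "norm q < 1"
  shows "vwp 1 q m / qp q q m = (if m = 0 then 1 else 1 + q ^ m)"
proof (cases m)
  case (Suc k)
  have p2: "q ^ (2 * Suc k) = (q * q ^ k) * (q * q ^ k)" by (simp only: mult_2 power_add power_Suc)
  have w: "vwp 1 q m = (1 - q * q ^ k) * (1 + q * q ^ k) * qp q q k"
    unfolding Suc vwp_Suc p2 by (simp add: algebra_simps)
  have p: "qp q q m = qp q q k * (1 - q * q ^ k)" unfolding Suc by (simp add: qp_Suc)
  have "qp q q k \<noteq> 0" "1 - q * q ^ k \<noteq> 0"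
    using qp_q_nonzero[OF assms] power_Suc_neq_1[OF assms, of k] by auto
  then show ?thesis unfolding w p using Suc by simp
qed simp

lemma vwp_q_div_qp:
  assumes "norm q < 1"
  shows "vwp q q m / qp q q m = (1 - q ^ (2 * m + 1)) / (1 - q)"
proof -
  have "vwp q q m = (1 - q ^ (2 * m + 1)) / (1 - q) * qp q q m"
  proof (cases m)
    case (Suc k)
    have "1 - q \<noteq> 0" using power_Suc_neq_1[OF assms, of 0] by simp
    then show ?thesis unfolding Suc vwp_Suc qp_Suc_left by (simp add: mult.commute)
  qed (use power_Suc_neq_1[OF assms, of 0] in simp)
  then show ?thesis using qp_q_nonzero[OF assms, of m] by simp
qed

lemma psi55_term_infsum_terminating:
  assumes q: "q \<noteq> 0" "norm q < 1" and aN: "a = q ^ Suc N"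
    and nz: "b \<noteq> 0" "c \<noteq> 0" "d \<noteq> 0" "e \<noteq> 0"
  shows "(\<Sum>\<^sub>\<infinity>k. psi55_term a b c d e q k) = (\<Sum>m\<le>N. vwp 1 q m / qp q q m * psi55_term a b c d e q (int m))"
proof -
  let ?f = "psi55_term a b c d e q"
  have a: "a \<noteq> 0" using aN q by simp
  have reflect: "?f (- int m) = q ^ m * ?f (int m)" for m
    by (rule psi55_term_reflect[OF q(1) a nz])
  have zero: "?f (int m) = 0" if "N < m" for m
  proof -
    have "qp (q / a) q m = 0" by (rule qp_eq_0I[of _ _ N]) (use aN q that in auto)
    then show ?thesis by (simp add: psi55_term_def qpoch_of_nat)
  qed
  have "(\<Sum>\<^sub>\<infinity>k. ?f k) = (\<Sum>m\<le>N. ?f (int m)) + (\<Sum>m\<in>{1..N}. q ^ m * ?f (int m))"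
    using infsum_int_finite_support[of N ?f N] zero reflect by simp
  also have "\<dots> = (\<Sum>m\<le>N. vwp 1 q m / qp q q m * ?f (int m))"
    by (simp add: vwp_1_div_qp[OF q(2)] sum.atMost_shift sum.atLeast1_atMost_eq sum.distrib algebra_simps
        del: sum.atMost_Suc)
  finally show ?thesis .
qed

lemma psi55_term_q_infsum_terminating:
  assumes q: "q \<noteq> 0" "norm q < 1" and aN: "a = q ^ Suc N"
    and nz: "b \<noteq> 0" "c \<noteq> 0" "d \<noteq> 0" "e \<noteq> 0" and ne: "b \<noteq> 1" "c \<noteq> 1" "d \<noteq> 1" "e \<noteq> 1"
  shows "(\<Sum>\<^sub>\<infinity>k. psi55_term_q a b c d e q k)
       = (1 - q) * (\<Sum>m\<le>N. vwp q q m / qp q q m * psi55_term_q a b c d e q (int m))"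
proof -
  let ?f = "psi55_term_q a b c d e q"
  have a: "a \<noteq> 0" "a \<noteq> 1" using aN q power_Suc_neq_1[OF q(2), of N] by auto
  have reflect: "?f (- int (Suc m)) = - (q ^ (2 * m + 1)) * ?f (int m)" for m
    by (rule psi55_term_q_reflect[OF q(1) a(1) nz a(2) ne])
  have zero: "?f (int m) = 0" if "N < m" for m
  proof -
    have "qp (q / a) q m = 0" by (rule qp_eq_0I[of _ _ N]) (use aN q that in auto)
    then show ?thesis by (simp add: psi55_term_q_def qpoch_of_nat)
  qed
  have zero': "?f (- int m) = 0" if "Suc N < m" for m
    using reflect[of "m - 1"] zero[of "m - 1"] that by (simp add: of_nat_diff)
  have "(\<Sum>\<^sub>\<infinity>k. ?f k) = (\<Sum>m\<le>N. ?f (int m)) + (\<Sum>m\<in>{1..Suc N}. ?f (- int m))"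
    by (rule infsum_int_finite_support) (use zero zero' in auto)
  also have "(\<Sum>m\<in>{1..Suc N}. ?f (- int m)) = (\<Sum>m<Suc N. ?f (- int (Suc m)))"
    using sum.atLeast1_atMost_eq[of "\<lambda>m. ?f (- int m)" "Suc N"] by simp
  also have "\<dots> = (\<Sum>m\<le>N. - (q ^ (2 * m + 1)) * ?f (int m))"
    unfolding lessThan_Suc_atMost reflect ..
  also have "(\<Sum>m\<le>N. ?f (int m)) + \<dots> = (\<Sum>m\<le>N. (1 - q ^ (2 * m + 1)) * ?f (int m))"
    by (simp add: sum.distrib[symmetric] algebra_simps)
  also have "\<dots> = (1 - q) * (\<Sum>m\<le>N. vwp q q m / qp q q m * ?f (int m))"
    unfolding sum_distrib_left using power_Suc_neq_1[OF q(2), of 0]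
    by (intro sum.cong refl) (simp add: vwp_q_div_qp[OF q(2)])
  finally show ?thesis .
qed

lemma qpoch_inf_first_prefactor:
  assumes q: "q \<noteq> 0" "norm q < 1" and aN: "a = q ^ Suc N"
    and hinf: "qpoch_inf a q * qpoch_inf b q * qpoch_inf c q * qpoch_inf (a*b*c/q^2) q \<noteq> 0"
  shows "qpoch_inf q q * qpoch_inf (a*b/q) q * qpoch_inf (b*c/q) q * qpoch_inf (a*c/q) q
       / (qpoch_inf a q * qpoch_inf b q * qpoch_inf c q * qpoch_inf (a*b*c/q^2) q)
       = qp q q N * qp (b * c / q) q N / (qp b q N * qp c q N)"
proof -
  have "q * q ^ N = a" "b * q ^ N = a * b / q" "c * q ^ N = a * c / q" "b * c / q * q ^ N = a * b * c / q ^ 2"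
    using aN q by (simp_all add: power2_eq_square)
  then have split: "qpoch_inf q q = qp q q N * qpoch_inf a q" "qpoch_inf b q = qp b q N * qpoch_inf (a*b/q) q"
    "qpoch_inf c q = qp c q N * qpoch_inf (a*c/q) q" "qpoch_inf (b*c/q) q = qp (b*c/q) q N * qpoch_inf (a*b*c/q^2) q"
    by (metis qpoch_inf_split[OF q(2)])+
  show ?thesis using hinf unfolding split by (simp add: field_simps)
qed

lemma psi55_term_sum_watson:
  assumes q: "q \<noteq> 0" "norm q < 1" and aN: "a = q ^ Suc N"
    and nz: "b \<noteq> 0" "c \<noteq> 0" "d \<noteq> 0" "e \<noteq> 0"
    and hb: "\<And>k. qp b q k \<noteq> 0" and hc: "\<And>k. qp c q k \<noteq> 0"
    and hd: "\<And>k. qp d q k \<noteq> 0" and he: "\<And>k. qp e q k \<noteq> 0"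
    and h3: "\<And>k. qp (q ^ 3 / (a * b * c)) q k \<noteq> 0"
  shows "(\<Sum>\<^sub>\<infinity>k. psi55_term a b c d e q k)
       = qp q q N * qp (b * c / q) q N / (qp b q N * qp c q N)
         * (\<Sum>j\<le>N. qp (q / a) q j * qp (q / b) q j * qp (q / c) q j * qp (d * e / q) q j
              / (qp q q j * qp d q j * qp e q j * qp (q ^ 3 / (a * b * c)) q j) * q ^ j)"
proof -
  have Q: "\<And>n. qp q q n \<noteq> 0" by (rule qp_q_nonzero[OF q(2)])
  have r: "1 * q / (q / x) = x" if "x \<noteq> 0" for x using q that by simp
  have hx: "1 * q / (q / x) * q ^ i \<noteq> 1" if "x \<noteq> 0" "\<And>k. qp x q k \<noteq> 0" for x i
    using that(2) qp_all_nonzero_iff[of x q] unfolding r[OF that(1)] by blast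
  have e: "1 / q ^ N = q / a" "1 * q ^ (N + 1) = a" "1 * q = q"
    "1 * q / (q / d * (q / e)) = d * e / q" "1 * q / (q / b * (q / c)) = b * c / q"
    "q / b * (q / c) / (1 * q ^ N) = q ^ 3 / (a * b * c)"
    using aN q nz by (simp_all add: field_simps power3_eq_cube)
  have z: "1\<^sup>2 * q ^ (N + 2) / (q / d * (q / e) * (q / b) * (q / c)) = a * b * c * d * e / q ^ 3"
    using aN q nz by (simp add: field_simps power3_eq_cube)
  have "(\<Sum>\<^sub>\<infinity>k. psi55_term a b c d e q k) = (\<Sum>m\<le>N. vwp 1 q m / qp q q m * psi55_term a b c d e q (int m))"
    by (rule psi55_term_infsum_terminating[OF q aN nz])
  also have "\<dots> = (\<Sum>m\<le>N. vwp_term 1 q N (1\<^sup>2 * q ^ (N + 2) / (q / d * (q / e) * (q / b) * (q / c))) m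
        * wp_ratio 1 q (q / d) m * wp_ratio 1 q (q / e) m * wp_ratio 1 q (q / b) m * wp_ratio 1 q (q / c) m)"
    unfolding z vwp_term_def wp_ratio_def psi55_term_def qpoch_of_nat r[OF nz(1)] r[OF nz(2)] r[OF nz(3)] r[OF nz(4)] e
    using q(1) by (simp add: mult_ac)
  also have "\<dots> = qp q q N * qp (b * c / q) q N / (qp b q N * qp c q N)
         * (\<Sum>j\<le>N. qp (q / a) q j * qp (q / b) q j * qp (q / c) q j * qp (d * e / q) q j
              / (qp q q j * qp d q j * qp e q j * qp (q ^ 3 / (a * b * c)) q j) * q ^ j)"
    using watson_transformation[OF q(1) Q, of 1 "q / d" "q / e" "q / b" "q / c" N] q nz
      hx[OF nz(3) hd] hx[OF nz(4) he] hx[OF nz(1) hb] hx[OF nz(2) hc] power_Suc_neq_1[OF q(2)] h3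
    unfolding r[OF nz(1)] r[OF nz(2)] r[OF nz(3)] r[OF nz(4)] e by (simp add: mult_ac)
  finally show ?thesis .
qed

lemma qpoch_inf_second_prefactor:
  assumes q: "q \<noteq> 0" "norm q < 1" and aN: "a = q ^ Suc N"
    and hinf: "qpoch_inf (a*q) q * qpoch_inf (b*q) q * qpoch_inf (c*q) q * qpoch_inf (a*b*c/q) q \<noteq> 0"
  shows "qpoch_inf q q * qpoch_inf (a*b) q * qpoch_inf (b*c) q * qpoch_inf (a*c) q
       / (qpoch_inf (a*q) q * qpoch_inf (b*q) q * qpoch_inf (c*q) q * qpoch_inf (a*b*c/q) q)
       = qp q q (Suc N) * qp (b * c) q N / (qp (b * q) q N * qp (c * q) q N)"
proof -
  have "q * q ^ Suc N = a * q" "b * q * q ^ N = a * b" "c * q * q ^ N = a * c" "b * c * q ^ N = a * b * c / q"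
    using aN q by simp_all
  then have split: "qpoch_inf q q = qp q q (Suc N) * qpoch_inf (a*q) q" "qpoch_inf (b*q) q = qp (b*q) q N * qpoch_inf (a*b) q"
    "qpoch_inf (c*q) q = qp (c*q) q N * qpoch_inf (a*c) q" "qpoch_inf (b*c) q = qp (b*c) q N * qpoch_inf (a*b*c/q) q"
    by (metis qpoch_inf_split[OF q(2)])+
  show ?thesis using hinf unfolding split by (simp add: field_simps)
qed

lemma psi55_term_q_sum_watson:
  assumes q: "q \<noteq> 0" "norm q < 1" and aN: "a = q ^ Suc N"
    and nz: "b \<noteq> 0" "c \<noteq> 0" "d \<noteq> 0" "e \<noteq> 0"
    and hb: "\<And>k. qp b q k \<noteq> 0" and hc: "\<And>k. qp c q k \<noteq> 0"
    and hd: "\<And>k. qp d q k \<noteq> 0" and he: "\<And>k. qp e q k \<noteq> 0"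
    and h2: "\<And>k. qp (q\<^sup>2 / (a * b * c)) q k \<noteq> 0"
  shows "(\<Sum>\<^sub>\<infinity>k. psi55_term_q a b c d e q k)
       = qp q q (Suc N) * qp (b * c) q N / (qp (b * q) q N * qp (c * q) q N)
         * (\<Sum>j\<le>N. qp (q / a) q j * qp (q / b) q j * qp (q / c) q j * qp (d * e) q j
              / (qp q q j * qp (d * q) q j * qp (e * q) q j * qp (q\<^sup>2 / (a * b * c)) q j) * q ^ j)"
proof -
  have Q: "\<And>n. qp q q n \<noteq> 0" by (rule qp_q_nonzero[OF q(2)])
  have ne: "x \<noteq> 1" if "\<And>k. qp x q k \<noteq> 0" for x
    using that[of 1] by (simp add: qp_def)
  have r: "q * q / (q / x) = x * q" if "x \<noteq> 0" for x using q that by simp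
  have hx: "q * q / (q / x) * q ^ i \<noteq> 1" if "x \<noteq> 0" "\<And>k. qp x q k \<noteq> 0" for x i
    using that(2) qp_all_nonzero_iff[of x q] unfolding r[OF that(1)] by (metis mult.assoc power_Suc)
  have hA: "q * q ^ Suc i \<noteq> 1" for i
    using power_Suc_neq_1[OF q(2), of "Suc i"] by simp
  have e: "1 / q ^ N = q / a" "q * q ^ (N + 1) = a * q"
    "q * q / (q / d * (q / e)) = d * e" "q * q / (q / b * (q / c)) = b * c"
    "q / b * (q / c) / (q * q ^ N) = q\<^sup>2 / (a * b * c)"
    using aN q nz by (simp_all add: field_simps power2_eq_square)
  have z: "q\<^sup>2 * q ^ (N + 2) / (q / d * (q / e) * (q / b) * (q / c)) = a * b * c * d * e / q"
    using aN q nz by (simp add: field_simps power2_eq_square)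
  have "(\<Sum>\<^sub>\<infinity>k. psi55_term_q a b c d e q k)
      = (1 - q) * (\<Sum>m\<le>N. vwp q q m / qp q q m * psi55_term_q a b c d e q (int m))"
    by (rule psi55_term_q_infsum_terminating[OF q aN nz ne[OF hb] ne[OF hc] ne[OF hd] ne[OF he]])
  also have "\<dots> = (1 - q) * (\<Sum>m\<le>N. vwp_term q q N (q\<^sup>2 * q ^ (N + 2) / (q / d * (q / e) * (q / b) * (q / c))) m
        * wp_ratio q q (q / d) m * wp_ratio q q (q / e) m * wp_ratio q q (q / b) m * wp_ratio q q (q / c) m)"
    unfolding z vwp_term_def wp_ratio_def psi55_term_q_def qpoch_of_nat r[OF nz(1)] r[OF nz(2)] r[OF nz(3)] r[OF nz(4)] e
    using q(1) by (simp add: mult_ac)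
  also have "\<dots> = (1 - q) * (qp (q * q) q N * qp (b * c) q N / (qp (b * q) q N * qp (c * q) q N)
         * (\<Sum>j\<le>N. qp (q / a) q j * qp (q / b) q j * qp (q / c) q j * qp (d * e) q j
              / (qp q q j * qp (d * q) q j * qp (e * q) q j * qp (q\<^sup>2 / (a * b * c)) q j) * q ^ j))"
    using watson_transformation[OF q(1) Q, of q "q / d" "q / e" "q / b" "q / c" N] q nz
      hx[OF nz(3) hd] hx[OF nz(4) he] hx[OF nz(1) hb] hx[OF nz(2) hc] hA h2
    unfolding r[OF nz(1)] r[OF nz(2)] r[OF nz(3)] r[OF nz(4)] e by (simp add: mult_ac)
  also have "\<dots> = qp q q (Suc N) * qp (b * c) q N / (qp (b * q) q N * qp (c * q) q N)
         * (\<Sum>j\<le>N. qp (q / a) q j * qp (q / b) q j * qp (q / c) q j * qp (d * e) q j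
              / (qp q q j * qp (d * q) q j * qp (e * q) q j * qp (q\<^sup>2 / (a * b * c)) q j) * q ^ j)"
    by (simp add: qp_Suc_left)
  finally show ?thesis .
qed

lemma psi55_first_identity_terminating:
  assumes q: "q \<noteq> 0" "norm q < 1" and aN: "a = q ^ Suc N"
    and nz: "b \<noteq> 0" "c \<noteq> 0" "d \<noteq> 0" "e \<noteq> 0"
    and hb: "\<And>k. qp b q k \<noteq> 0" and hc: "\<And>k. qp c q k \<noteq> 0"
    and hd: "\<And>k. qp d q k \<noteq> 0" and he: "\<And>k. qp e q k \<noteq> 0"
    and h3: "\<forall>k::nat. qpoch (q^3/(a*b*c)) q (int k) \<noteq> 0"
    and hinf: "qpoch_inf a q * qpoch_inf b q * qpoch_inf c q * qpoch_inf (a*b*c/q^2) q \<noteq> 0"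
  shows "(\<Sum>\<^sub>\<infinity>k. psi55_term a b c d e q k)
     = qpoch_inf q q * qpoch_inf (a*b/q) q * qpoch_inf (b*c/q) q * qpoch_inf (a*c/q) q
       / (qpoch_inf a q * qpoch_inf b q * qpoch_inf c q * qpoch_inf (a*b*c/q^2) q)
       * (\<Sum>k. qpoch (q/a) q (int k) * qpoch (q/b) q (int k) * qpoch (q/c) q (int k) * qpoch (d*e/q) q (int k)
            / (qpoch q q (int k) * qpoch (q^3/(a*b*c)) q (int k) * qpoch d q (int k) * qpoch e q (int k)) * q ^ k)"
proof -
  have "qp (q / a) q k = 0" if "k \<notin> {..N}" for k
    by (rule qp_eq_0I[of _ _ N]) (use aN q that in auto)
  then have "(\<Sum>k. qpoch (q/a) q (int k) * qpoch (q/b) q (int k) * qpoch (q/c) q (int k) * qpoch (d*e/q) q (int k)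
            / (qpoch q q (int k) * qpoch (q^3/(a*b*c)) q (int k) * qpoch d q (int k) * qpoch e q (int k)) * q ^ k)
      = (\<Sum>j\<le>N. qp (q / a) q j * qp (q / b) q j * qp (q / c) q j * qp (d * e / q) q j
              / (qp q q j * qp d q j * qp e q j * qp (q ^ 3 / (a * b * c)) q j) * q ^ j)"
    unfolding qpoch_of_nat by (subst suminf_finite[of "{..N}"]) (auto simp: mult_ac)
  then show ?thesis
    using psi55_term_sum_watson[OF q aN nz hb hc hd he] h3
    unfolding qpoch_inf_first_prefactor[OF q aN hinf] qpoch_of_nat by simp
qed

lemma psi55_second_identity_terminating:
  assumes q: "q \<noteq> 0" "norm q < 1" and aN: "a = q ^ Suc N"
    and nz: "b \<noteq> 0" "c \<noteq> 0" "d \<noteq> 0" "e \<noteq> 0"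
    and hb: "\<And>k. qp b q k \<noteq> 0" and hc: "\<And>k. qp c q k \<noteq> 0"
    and hd: "\<And>k. qp d q k \<noteq> 0" and he: "\<And>k. qp e q k \<noteq> 0"
    and h2: "\<forall>k::nat. qpoch (q^2/(a*b*c)) q (int k) \<noteq> 0"
    and hinf: "qpoch_inf (a*q) q * qpoch_inf (b*q) q * qpoch_inf (c*q) q * qpoch_inf (a*b*c/q) q \<noteq> 0"
  shows "(\<Sum>\<^sub>\<infinity>k. psi55_term_q a b c d e q k)
     = qpoch_inf q q * qpoch_inf (a*b) q * qpoch_inf (b*c) q * qpoch_inf (a*c) q
       / (qpoch_inf (a*q) q * qpoch_inf (b*q) q * qpoch_inf (c*q) q * qpoch_inf (a*b*c/q) q)
       * (\<Sum>k. qpoch (q/a) q (int k) * qpoch (q/b) q (int k) * qpoch (q/c) q (int k) * qpoch (d*e) q (int k)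
            / (qpoch q q (int k) * qpoch (q^2/(a*b*c)) q (int k) * qpoch (d*q) q (int k) * qpoch (e*q) q (int k)) * q ^ k)"
proof -
  have "qp (q / a) q k = 0" if "k \<notin> {..N}" for k
    by (rule qp_eq_0I[of _ _ N]) (use aN q that in auto)
  then have "(\<Sum>k. qpoch (q/a) q (int k) * qpoch (q/b) q (int k) * qpoch (q/c) q (int k) * qpoch (d*e) q (int k)
            / (qpoch q q (int k) * qpoch (q^2/(a*b*c)) q (int k) * qpoch (d*q) q (int k) * qpoch (e*q) q (int k)) * q ^ k)
      = (\<Sum>j\<le>N. qp (q / a) q j * qp (q / b) q j * qp (q / c) q j * qp (d * e) q j
              / (qp q q j * qp (d * q) q j * qp (e * q) q j * qp (q\<^sup>2 / (a * b * c)) q j) * q ^ j)"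
    unfolding qpoch_of_nat by (subst suminf_finite[of "{..N}"]) (auto simp: mult_ac)
  then show ?thesis
    using psi55_term_q_sum_watson[OF q aN nz hb hc hd he] h2
    unfolding qpoch_inf_second_prefactor[OF q aN hinf] qpoch_of_nat by simp
qed

lemma psi55_term_swap12: "psi55_term b a c d e q = psi55_term a b c d e q"
  and psi55_term_swap13: "psi55_term c b a d e q = psi55_term a b c d e q"
  and psi55_term_q_swap12: "psi55_term_q b a c d e q = psi55_term_q a b c d e q"
  and psi55_term_q_swap13: "psi55_term_q c b a d e q = psi55_term_q a b c d e q"
  by (simp_all add: fun_eq_iff psi55_term_def psi55_term_q_def ac_simps)

lemma psi55_first_identity:
  assumes q: "q \<noteq> 0" "norm q < 1" and N: "a = q ^ Suc N \<or> b = q ^ Suc N \<or> c = q ^ Suc N"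
    and nz: "a \<noteq> 0" "b \<noteq> 0" "c \<noteq> 0" "d \<noteq> 0" "e \<noteq> 0"
    and h: "\<And>k. qp a q k \<noteq> 0" "\<And>k. qp b q k \<noteq> 0" "\<And>k. qp c q k \<noteq> 0" "\<And>k. qp d q k \<noteq> 0" "\<And>k. qp e q k \<noteq> 0"
    and h3: "\<forall>k::nat. qpoch (q^3/(a*b*c)) q (int k) \<noteq> 0"
    and hinf: "qpoch_inf a q * qpoch_inf b q * qpoch_inf c q * qpoch_inf (a*b*c/q^2) q \<noteq> 0"
  shows "(\<Sum>\<^sub>\<infinity>k. psi55_term a b c d e q k)
     = qpoch_inf q q * qpoch_inf (a*b/q) q * qpoch_inf (b*c/q) q * qpoch_inf (a*c/q) q
       / (qpoch_inf a q * qpoch_inf b q * qpoch_inf c q * qpoch_inf (a*b*c/q^2) q)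
       * (\<Sum>k. qpoch (q/a) q (int k) * qpoch (q/b) q (int k) * qpoch (q/c) q (int k) * qpoch (d*e/q) q (int k)
            / (qpoch q q (int k) * qpoch (q^3/(a*b*c)) q (int k) * qpoch d q (int k) * qpoch e q (int k)) * q ^ k)"
  using N
proof (elim disjE)
  assume "a = q ^ Suc N"
  from psi55_first_identity_terminating[OF q this nz(2-5) h(2-5) h3 hinf] show ?thesis .
next
  assume b: "b = q ^ Suc N"
  have "\<forall>k::nat. qpoch (q^3/(b*a*c)) q (int k) \<noteq> 0"
    "qpoch_inf b q * qpoch_inf a q * qpoch_inf c q * qpoch_inf (b*a*c/q^2) q \<noteq> 0"
    using h3 hinf by (simp_all add: ac_simps)
  from psi55_first_identity_terminating[OF q b nz(1,3-5) h(1,3-5) this] show ?thesis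
    by (simp only: psi55_term_swap12 ac_simps)
next
  assume c: "c = q ^ Suc N"
  have "\<forall>k::nat. qpoch (q^3/(c*b*a)) q (int k) \<noteq> 0"
    "qpoch_inf c q * qpoch_inf b q * qpoch_inf a q * qpoch_inf (c*b*a/q^2) q \<noteq> 0"
    using h3 hinf by (simp_all add: ac_simps)
  from psi55_first_identity_terminating[OF q c nz(2,1,4,5) h(2,1,4,5) this] show ?thesis
    by (simp only: psi55_term_swap13 ac_simps)
qed

lemma psi55_second_identity:
  assumes q: "q \<noteq> 0" "norm q < 1" and N: "a = q ^ Suc N \<or> b = q ^ Suc N \<or> c = q ^ Suc N"
    and nz: "a \<noteq> 0" "b \<noteq> 0" "c \<noteq> 0" "d \<noteq> 0" "e \<noteq> 0"
    and h: "\<And>k. qp a q k \<noteq> 0" "\<And>k. qp b q k \<noteq> 0" "\<And>k. qp c q k \<noteq> 0" "\<And>k. qp d q k \<noteq> 0" "\<And>k. qp e q k \<noteq> 0"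
    and h2: "\<forall>k::nat. qpoch (q^2/(a*b*c)) q (int k) \<noteq> 0"
    and hinf: "qpoch_inf (a*q) q * qpoch_inf (b*q) q * qpoch_inf (c*q) q * qpoch_inf (a*b*c/q) q \<noteq> 0"
  shows "(\<Sum>\<^sub>\<infinity>k. psi55_term_q a b c d e q k)
     = qpoch_inf q q * qpoch_inf (a*b) q * qpoch_inf (b*c) q * qpoch_inf (a*c) q
       / (qpoch_inf (a*q) q * qpoch_inf (b*q) q * qpoch_inf (c*q) q * qpoch_inf (a*b*c/q) q)
       * (\<Sum>k. qpoch (q/a) q (int k) * qpoch (q/b) q (int k) * qpoch (q/c) q (int k) * qpoch (d*e) q (int k)
            / (qpoch q q (int k) * qpoch (q^2/(a*b*c)) q (int k) * qpoch (d*q) q (int k) * qpoch (e*q) q (int k)) * q ^ k)"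
  using N
proof (elim disjE)
  assume "a = q ^ Suc N"
  from psi55_second_identity_terminating[OF q this nz(2-5) h(2-5) h2 hinf] show ?thesis .
next
  assume b: "b = q ^ Suc N"
  have "\<forall>k::nat. qpoch (q^2/(b*a*c)) q (int k) \<noteq> 0"
    "qpoch_inf (b*q) q * qpoch_inf (a*q) q * qpoch_inf (c*q) q * qpoch_inf (b*a*c/q) q \<noteq> 0"
    using h2 hinf by (simp_all add: ac_simps)
  from psi55_second_identity_terminating[OF q b nz(1,3-5) h(1,3-5) this] show ?thesis
    by (simp only: psi55_term_q_swap12 ac_simps)
next
  assume c: "c = q ^ Suc N"
  have "\<forall>k::nat. qpoch (q^2/(c*b*a)) q (int k) \<noteq> 0"
    "qpoch_inf (c*q) q * qpoch_inf (b*q) q * qpoch_inf (a*q) q * qpoch_inf (c*b*a/q) q \<noteq> 0"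
    using h2 hinf by (simp_all add: ac_simps)
  from psi55_second_identity_terminating[OF q c nz(2,1,4,5) h(2,1,4,5) this] show ?thesis
    by (simp only: psi55_term_q_swap13 ac_simps)
qed

theorem theorem1p1:
  fixes q a b c d e :: complex
  assumes hq: "0 < norm q" "norm q < 1"
    and hn: "\<exists>n::nat. n \<ge> 1 \<and> (a = q ^ n \<or> b = q ^ n \<or> c = q ^ n)"
    and hnz: "a \<noteq> 0" "b \<noteq> 0" "c \<noteq> 0" "d \<noteq> 0" "e \<noteq> 0"
    and hwd: "\<forall>k::nat. qpoch a q (int k) \<noteq> 0 \<and> qpoch b q (int k) \<noteq> 0 \<and>
                qpoch c q (int k) \<noteq> 0 \<and> qpoch d q (int k) \<noteq> 0 \<and> qpoch e q (int k) \<noteq> 0"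
  shows
   "(((\<forall>k::nat. qpoch (q^3/(a*b*c)) q (int k) \<noteq> 0)
      \<and> qpoch_inf a q * qpoch_inf b q * qpoch_inf c q * qpoch_inf (a*b*c/q^2) q \<noteq> 0
      \<and> (\<lambda>k::int. qpoch (q/a) q k * qpoch (q/b) q k * qpoch (q/c) q k * qpoch (q/d) q k * qpoch (q/e) q k
            / (qpoch a q k * qpoch b q k * qpoch c q k * qpoch d q k * qpoch e q k)
            * (a*b*c*d*e / q^3) powi k) summable_on UNIV)
     \<longrightarrow>
     (\<Sum>\<^sub>\<infinity>k::int. qpoch (q/a) q k * qpoch (q/b) q k * qpoch (q/c) q k * qpoch (q/d) q k * qpoch (q/e) q k
            / (qpoch a q k * qpoch b q k * qpoch c q k * qpoch d q k * qpoch e q k)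
            * (a*b*c*d*e / q^3) powi k)
     = qpoch_inf q q * qpoch_inf (a*b/q) q * qpoch_inf (b*c/q) q * qpoch_inf (a*c/q) q
       / (qpoch_inf a q * qpoch_inf b q * qpoch_inf c q * qpoch_inf (a*b*c/q^2) q)
       * (\<Sum>k::nat. qpoch (q/a) q (int k) * qpoch (q/b) q (int k) * qpoch (q/c) q (int k)
                      * qpoch (d*e/q) q (int k)
            / (qpoch q q (int k) * qpoch (q^3/(a*b*c)) q (int k) * qpoch d q (int k) * qpoch e q (int k))
            * q ^ k))
    \<and>
    (((\<forall>k::nat. qpoch (q^2/(a*b*c)) q (int k) \<noteq> 0 \<and> qpoch (d*q) q (int k) \<noteq> 0
                 \<and> qpoch (e*q) q (int k) \<noteq> 0)
      \<and> qpoch_inf (a*q) q * qpoch_inf (b*q) q * qpoch_inf (c*q) q * qpoch_inf (a*b*c/q) q \<noteq> 0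
      \<and> (\<lambda>k::int. qpoch (q/a) q k * qpoch (q/b) q k * qpoch (q/c) q k * qpoch (q/d) q k * qpoch (q/e) q k
            / (qpoch (a*q) q k * qpoch (b*q) q k * qpoch (c*q) q k * qpoch (d*q) q k * qpoch (e*q) q k)
            * (a*b*c*d*e / q) powi k) summable_on UNIV)
     \<longrightarrow>
     (\<Sum>\<^sub>\<infinity>k::int. qpoch (q/a) q k * qpoch (q/b) q k * qpoch (q/c) q k * qpoch (q/d) q k * qpoch (q/e) q k
            / (qpoch (a*q) q k * qpoch (b*q) q k * qpoch (c*q) q k * qpoch (d*q) q k * qpoch (e*q) q k)
            * (a*b*c*d*e / q) powi k)
     = qpoch_inf q q * qpoch_inf (a*b) q * qpoch_inf (b*c) q * qpoch_inf (a*c) q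
       / (qpoch_inf (a*q) q * qpoch_inf (b*q) q * qpoch_inf (c*q) q * qpoch_inf (a*b*c/q) q)
       * (\<Sum>k::nat. qpoch (q/a) q (int k) * qpoch (q/b) q (int k) * qpoch (q/c) q (int k)
                      * qpoch (d*e) q (int k)
            / (qpoch q q (int k) * qpoch (q^2/(a*b*c)) q (int k) * qpoch (d*q) q (int k) * qpoch (e*q) q (int k))
            * q ^ k))"
proof -
  have q: "q \<noteq> 0" "norm q < 1" using hq by auto
  from hn obtain n where "n \<ge> 1" "a = q ^ n \<or> b = q ^ n \<or> c = q ^ n" by blast
  then have N: "a = q ^ Suc (n - 1) \<or> b = q ^ Suc (n - 1) \<or> c = q ^ Suc (n - 1)" by simp
  have h: "\<And>k. qp a q k \<noteq> 0" "\<And>k. qp b q k \<noteq> 0" "\<And>k. qp c q k \<noteq> 0" "\<And>k. qp d q k \<noteq> 0" "\<And>k. qp e q k \<noteq> 0"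
    using hwd by (simp_all add: qpoch_of_nat)
  show ?thesis
    using psi55_first_identity[OF q N hnz h, unfolded psi55_term_def]
      psi55_second_identity[OF q N hnz h, unfolded psi55_term_q_def]
    by (intro conjI impI; elim conjE; simp)
qed

end
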